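(* Let $X$ be a finite set with $\ell=|X|\geq 2$ and let $D\leq D'\leq\mathrm{Sym}(X)$ be such that (a) $D$ is an essential subgroup of $D'$, and (b) $|D'|<(D':D)^{\ell}$. Then for every integer $k\geq 1$, the locally compact group $L(D,D')^k$ contains no lattice.
   Context: Let $\mathcal{R}_X$ be the rooted tree whose vertices are the finite words over $X$ (root = empty word, children of $w$ are $wx$, $x\in X$). For an automorphism $g$ of $\mathcal{R}_X$ and a vertex $w$, the local permutation $\sigma(g,w)\in\mathrm{Sym}(X)$ is defined by $g(wx)=g(w)\,\sigma(g,w)(x)$. Let $L_0=\{g:\sigma(g,w)\in D \text{ for all } w\}$ (the infinitely iterated wreath product $\cdots\wr D\wr D$, a profinite group with the topology of pointwise convergence on vertices), and for $n\geq0$ let $L_n=\{g:\sigma(g,w)\in D' \text{ for all } w \text{ and } \sigma(g,w)\in D \text{ whenever } w \text{ has length}\geq n\}$. $L(D,D')=\bigcup_n L_n$, endowed with the group topology making the inclusion $L_0\hookrightarrow L(D,D')$ continuous and open; it is a locally elliptic totally disconnected locally compact group. A subgroup $H$ of a group $G$ is essential if $H$ intersects every non-trivial subgroup of $G$ non-trivially. A lattice is a discrete subgroup of finite covolume. *)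

theory Defs
  imports "HOL-Analysis.Analysis"
begin

text \<open>The alphabet X is the finite type 'a (X = UNIV). A subgroup of Sym(X) is a set of
bijections containing id and closed under composition and inverse.\<close>

definition perm_group :: "('a \<Rightarrow> 'a) set \<Rightarrow> bool" where
  "perm_group H \<longleftrightarrow> H \<subseteq> {f. bij f} \<and> id \<in> H \<and>
     (\<forall>f\<in>H. \<forall>g\<in>H. f \<circ> g \<in> H) \<and> (\<forall>f\<in>H. inv f \<in> H)"

definition essential_subgroup :: "('a \<Rightarrow> 'a) set \<Rightarrow> ('a \<Rightarrow> 'a) set \<Rightarrow> bool" where
  "essential_subgroup D D' \<longleftrightarrow>
     (\<forall>H. perm_group H \<and> H \<subseteq> D' \<and> H \<noteq> {id} \<longrightarrow> H \<inter> D \<noteq> {id})"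

text \<open>Vertices of the rooted tree are words (lists) over 'a; children of w are w @ [x].\<close>

definition tree_aut :: "('a list \<Rightarrow> 'a list) \<Rightarrow> bool" where
  "tree_aut g \<longleftrightarrow> bij g \<and> g [] = [] \<and> (\<forall>w x. \<exists>y. g (w @ [x]) = g w @ [y])"

definition local_perm :: "('a list \<Rightarrow> 'a list) \<Rightarrow> 'a list \<Rightarrow> ('a \<Rightarrow> 'a)" where
  "local_perm g w = (\<lambda>x. last (g (w @ [x])))"

definition L0 :: "('a \<Rightarrow> 'a) set \<Rightarrow> ('a list \<Rightarrow> 'a list) set" where
  "L0 D = {g. tree_aut g \<and> (\<forall>w. local_perm g w \<in> D)}"

definition Ln :: "('a \<Rightarrow> 'a) set \<Rightarrow> ('a \<Rightarrow> 'a) set \<Rightarrow> nat \<Rightarrow> ('a list \<Rightarrow> 'a list) set" where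
  "Ln D D' n = {g. tree_aut g \<and> (\<forall>w. local_perm g w \<in> D') \<and>
                    (\<forall>w. n \<le> length w \<longrightarrow> local_perm g w \<in> D)}"

definition LDD :: "('a \<Rightarrow> 'a) set \<Rightarrow> ('a \<Rightarrow> 'a) set \<Rightarrow> ('a list \<Rightarrow> 'a list) set" where
  "LDD D D' = (\<Union>n. Ln D D' n)"

text \<open>An element of L(D,D')^k is a family f :: nat => tree automorphism with f i in L(D,D')
for i < k and f i = id for i >= k. Multiplication is componentwise composition.\<close>

definition Lpow :: "('a \<Rightarrow> 'a) set \<Rightarrow> ('a \<Rightarrow> 'a) set \<Rightarrow> nat \<Rightarrow> (nat \<Rightarrow> 'a list \<Rightarrow> 'a list) set" where
  "Lpow D D' k = {f. (\<forall>i<k. f i \<in> LDD D D') \<and> (\<forall>i. k \<le> i \<longrightarrow> f i = id)}"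

definition pmult :: "(nat \<Rightarrow> 'a list \<Rightarrow> 'a list) \<Rightarrow> (nat \<Rightarrow> 'a list \<Rightarrow> 'a list) \<Rightarrow> (nat \<Rightarrow> 'a list \<Rightarrow> 'a list)" where
  "pmult f g = (\<lambda>i. f i \<circ> g i)"

definition pinv :: "(nat \<Rightarrow> 'a list \<Rightarrow> 'a list) \<Rightarrow> (nat \<Rightarrow> 'a list \<Rightarrow> 'a list)" where
  "pinv f = (\<lambda>i. inv (f i))"

definition pone :: "nat \<Rightarrow> 'a list \<Rightarrow> 'a list" where
  "pone = (\<lambda>i. id)"

text \<open>V m = (pointwise stabiliser in L_0 of the ball of radius m)^k: a neighbourhood basis of
the identity consisting of compact open subgroups. V 0 = L_0^k.\<close>

definition Vnbhd :: "('a \<Rightarrow> 'a) set \<Rightarrow> nat \<Rightarrow> nat \<Rightarrow> (nat \<Rightarrow> 'a list \<Rightarrow> 'a list) set" where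
  "Vnbhd D k m = {f. (\<forall>i<k. f i \<in> L0 D \<and> (\<forall>w. length w \<le> m \<longrightarrow> f i w = w)) \<and>
                       (\<forall>i. k \<le> i \<longrightarrow> f i = id)}"

text \<open>The group topology on L(D,D')^k: L_0^k is open and carries the product of the topologies
of pointwise convergence on vertices; left translates of the V m form a basis.\<close>

definition Ltop :: "('a \<Rightarrow> 'a) set \<Rightarrow> ('a \<Rightarrow> 'a) set \<Rightarrow> nat \<Rightarrow> (nat \<Rightarrow> 'a list \<Rightarrow> 'a list) topology" where
  "Ltop D D' k = topology (\<lambda>S. S \<subseteq> Lpow D D' k \<and>
       (\<forall>g\<in>S. \<exists>m. pmult g ` Vnbhd D k m \<subseteq> S))"

definition is_subgroup :: "('a \<Rightarrow> 'a) set \<Rightarrow> ('a \<Rightarrow> 'a) set \<Rightarrow> nat \<Rightarrow> (nat \<Rightarrow> 'a list \<Rightarrow> 'a list) set \<Rightarrow> bool" where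
  "is_subgroup D D' k \<Gamma> \<longleftrightarrow> \<Gamma> \<subseteq> Lpow D D' k \<and> pone \<in> \<Gamma> \<and>
     (\<forall>f\<in>\<Gamma>. \<forall>g\<in>\<Gamma>. pmult f g \<in> \<Gamma>) \<and> (\<forall>f\<in>\<Gamma>. pinv f \<in> \<Gamma>)"

definition is_discrete :: "('a \<Rightarrow> 'a) set \<Rightarrow> ('a \<Rightarrow> 'a) set \<Rightarrow> nat \<Rightarrow> (nat \<Rightarrow> 'a list \<Rightarrow> 'a list) set \<Rightarrow> bool" where
  "is_discrete D D' k \<Gamma> \<longleftrightarrow> (\<forall>g\<in>\<Gamma>. \<exists>S. openin (Ltop D D' k) S \<and> S \<inter> \<Gamma> = {g})"

definition dcoset :: "('a \<Rightarrow> 'a) set \<Rightarrow> nat \<Rightarrow> (nat \<Rightarrow> 'a list \<Rightarrow> 'a list) set \<Rightarrow> (nat \<Rightarrow> 'a list \<Rightarrow> 'a list) \<Rightarrow> (nat \<Rightarrow> 'a list \<Rightarrow> 'a list) set" where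
  "dcoset D k \<Gamma> g = {pmult (pmult \<gamma> g) u | \<gamma> u. \<gamma> \<in> \<Gamma> \<and> u \<in> Vnbhd D k 0}"

definition dcosets :: "('a \<Rightarrow> 'a) set \<Rightarrow> ('a \<Rightarrow> 'a) set \<Rightarrow> nat \<Rightarrow> (nat \<Rightarrow> 'a list \<Rightarrow> 'a list) set \<Rightarrow> (nat \<Rightarrow> 'a list \<Rightarrow> 'a list) set set" where
  "dcosets D D' k \<Gamma> = dcoset D k \<Gamma> ` Lpow D D' k"

text \<open>Haar measure of the fundamental domain of Gamma inside the double coset Gamma g U,
normalised by mu(U) = 1: it equals 1 / |Gamma \<inter> g U g^-1|.\<close>
definition dcoset_mass :: "('a \<Rightarrow> 'a) set \<Rightarrow> ('a \<Rightarrow> 'a) set \<Rightarrow> nat \<Rightarrow> (nat \<Rightarrow> 'a list \<Rightarrow> 'a list) set \<Rightarrow> (nat \<Rightarrow> 'a list \<Rightarrow> 'a list) set \<Rightarrow> real" where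
  "dcoset_mass D D' k \<Gamma> C =
     (let g = (SOME g. g \<in> Lpow D D' k \<and> C = dcoset D k \<Gamma> g)
      in 1 / real (card (\<Gamma> \<inter> (\<lambda>u. pmult (pmult g u) (pinv g)) ` Vnbhd D k 0)))"

text \<open>Finite covolume: the (left) Haar measure of Gamma \ G, computed as the sum over
double cosets Gamma \ G / U, is finite.\<close>
definition finite_covolume :: "('a \<Rightarrow> 'a) set \<Rightarrow> ('a \<Rightarrow> 'a) set \<Rightarrow> nat \<Rightarrow> (nat \<Rightarrow> 'a list \<Rightarrow> 'a list) set \<Rightarrow> bool" where
  "finite_covolume D D' k \<Gamma> \<longleftrightarrow> dcoset_mass D D' k \<Gamma> summable_on dcosets D D' k \<Gamma>"

definition is_lattice :: "('a \<Rightarrow> 'a) set \<Rightarrow> ('a \<Rightarrow> 'a) set \<Rightarrow> nat \<Rightarrow> (nat \<Rightarrow> 'a list \<Rightarrow> 'a list) set \<Rightarrow> bool" where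
  "is_lattice D D' k \<Gamma> \<longleftrightarrow> is_subgroup D D' k \<Gamma> \<and> is_discrete D D' k \<Gamma> \<and> finite_covolume D D' k \<Gamma>"

end

theory Submission
  imports Defs "HOL-Algebra.Group"
begin

text \<open>Suppose \<open>\<Gamma>\<close> is a lattice in \<open>L(D,D')\<^sup>k\<close>. Discreteness gives \<open>m\<close> with \<open>\<Gamma> \<inter> V\<^sub>m = 1\<close>; fix \<open>n \<ge> m\<close>.
  Since \<open>D\<close> is essential in \<open>D'\<close>, an element of \<open>\<Gamma> \<inter> (L\<^sub>n\<^sub>+\<^sub>1)\<^sup>k\<close> fixing the ball of radius \<open>n\<close> is trivial:
  the local permutations at level \<open>n\<close> of all such elements form a subgroup of \<open>D'\<^sup>V\<close> that meets \<open>D\<^sup>V\<close>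
  only in elements of \<open>\<Gamma> \<inter> V\<^sub>m\<close>. So \<open>\<Gamma> \<inter> (L\<^sub>n\<^sub>+\<^sub>1)\<^sup>k\<close> is determined by its local permutations on the
  \<open>N\<^sub>n\<close> vertices of length \<open>< n\<close>, and \<open>|\<Gamma> \<inter> (L\<^sub>n\<^sub>+\<^sub>1)\<^sup>k| \<le> |D'|\<^bsup>k N\<^sub>n\<^esup>\<close>. On the other hand, portraits with
  local permutations from a set \<open>Q\<close> of representatives of \<open>D'/D\<close> give \<open>|Q|\<^bsup>k N\<^sub>n\<^sub>+\<^sub>1\<^esup>\<close> elements of
  \<open>(L\<^sub>n\<^sub>+\<^sub>1)\<^sup>k\<close> in distinct left cosets of \<open>U = L\<^sub>0\<^sup>k\<close>, and a double coset \<open>\<Gamma>gU\<close>, of mass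
  \<open>1 / |\<Gamma> \<inter> gUg\<inverse>|\<close>, contains at most \<open>|\<Gamma> \<inter> (L\<^sub>n\<^sub>+\<^sub>1)\<^sup>k|\<close> times its mass of them. Hence the covolume is at
  least \<open>|Q|\<^bsup>k N\<^sub>n\<^sub>+\<^sub>1\<^esup> / |D'|\<^bsup>k N\<^sub>n\<^esup> \<ge> (1 + 1/|D'|)\<^bsup>k N\<^sub>n\<^esup> \<ge> n / |D'|\<close>, by \<open>N\<^sub>n\<^sub>+\<^sub>1 = 1 + \<ell> N\<^sub>n\<close> and
  \<open>|D'| < |Q|\<^sup>\<ell>\<close>, so it is infinite.\<close>

\<comment> \<open>HOL-Algebra's syntax \<open>inv\<close> for the group inverse would hide \<open>Hilbert_Choice.inv\<close>, used throughout.\<close>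
no_notation m_inv (\<open>(\<open>open_block notation=\<open>prefix inv\<close>\<close>inv\<index> _)\<close> [81] 80)

section \<open>Tree automorphisms and their local permutations\<close>

lemma tree_aut_append:
  assumes "tree_aut g" shows "g (w @ [x]) = g w @ [local_perm g w x]"
proof -
  obtain y where "g (w @ [x]) = g w @ [y]" using assms unfolding tree_aut_def by blast
  then show ?thesis unfolding local_perm_def by simp
qed

lemma tree_aut_Nil: "tree_aut g \<Longrightarrow> g [] = []"
  by (simp add: tree_aut_def)

lemma length_tree_aut:
  assumes "tree_aut g" shows "length (g w) = length w"
  by (induction w rule: rev_induct) (simp_all add: tree_aut_Nil[OF assms] tree_aut_append[OF assms])

lemma bij_local_perm:
  fixes g :: "'a::finite list \<Rightarrow> 'a list"
  assumes "tree_aut g" shows "bij (local_perm g w)"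
proof -
  have "inj g" using assms bij_is_inj unfolding tree_aut_def by blast
  have "inj (local_perm g w)"
  proof (rule injI)
    fix x y assume "local_perm g w x = local_perm g w y"
    then have "g (w @ [x]) = g (w @ [y])" by (simp add: tree_aut_append[OF assms])
    then show "x = y" using \<open>inj g\<close> by (simp add: inj_eq)
  qed
  then show ?thesis using finite_UNIV_inj_surj[of "local_perm g w"] by (simp add: bij_def)
qed

lemma tree_aut_id: "tree_aut id"
  by (simp add: tree_aut_def)

lemma local_perm_id [simp]: "local_perm id w = id"
  by (simp add: local_perm_def fun_eq_iff)

lemma local_perm_eq_id_if_fixes:
  assumes "\<And>x. g (w @ [x]) = w @ [x]" shows "local_perm g w = id"
  using assms by (simp add: local_perm_def fun_eq_iff)

lemma tree_aut_comp:
  assumes "tree_aut g" "tree_aut h" shows "tree_aut (g \<circ> h)"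
proof -
  have "bij (g \<circ> h)" using assms by (simp add: tree_aut_def bij_comp)
  moreover have "(g \<circ> h) (w @ [x]) = (g \<circ> h) w @ [local_perm g (h w) (local_perm h w x)]" for w x
    by (simp add: tree_aut_append[OF assms(1)] tree_aut_append[OF assms(2)])
  ultimately show ?thesis using assms by (simp add: tree_aut_def)
qed

lemma local_perm_comp:
  assumes "tree_aut g" "tree_aut h"
  shows "local_perm (g \<circ> h) w = local_perm g (h w) \<circ> local_perm h w"
  by (simp add: fun_eq_iff local_perm_def[of "g \<circ> h"] tree_aut_append[OF assms(1)]
      tree_aut_append[OF assms(2)])

lemma inv_tree_aut_append:
  fixes g :: "'a::finite list \<Rightarrow> 'a list"
  assumes "tree_aut g"
  shows "inv g (w @ [x]) = inv g w @ [inv (local_perm g (inv g w)) x]"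
proof -
  have g: "bij g" using assms by (simp add: tree_aut_def)
  let ?v = "inv g w" and ?\<sigma> = "local_perm g (inv g w)"
  have "g (?v @ [inv ?\<sigma> x]) = g ?v @ [?\<sigma> (inv ?\<sigma> x)]" by (rule tree_aut_append[OF assms])
  also have "\<dots> = w @ [x]"
    using g bij_local_perm[OF assms] by (simp add: bij_inv_eq_iff bij_is_surj surj_f_inv_f)
  finally show ?thesis using g by (metis bij_inv_eq_iff)
qed

lemma tree_aut_inv:
  fixes g :: "'a::finite list \<Rightarrow> 'a list"
  assumes "tree_aut g" shows "tree_aut (inv g)"
proof -
  have "bij g" using assms by (simp add: tree_aut_def)
  then have "inv g [] = []" using tree_aut_Nil[OF assms] by (metis bij_inv_eq_iff)
  then show ?thesis using \<open>bij g\<close> inv_tree_aut_append[OF assms]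
    by (auto simp: tree_aut_def bij_imp_bij_inv)
qed

lemma local_perm_inv:
  fixes g :: "'a::finite list \<Rightarrow> 'a list"
  assumes "tree_aut g" shows "local_perm (inv g) w = inv (local_perm g (inv g w))"
  by (simp add: local_perm_def[of "inv g"] fun_eq_iff inv_tree_aut_append[OF assms])

lemma tree_aut_eq_upto:
  assumes "tree_aut g" "tree_aut g'"
    and "\<And>v. length v < length w \<Longrightarrow> local_perm g v = local_perm g' v"
  shows "g w = g' w"
  using assms(3)
proof (induction w rule: rev_induct)
  case Nil then show ?case using assms by (simp add: tree_aut_Nil)
next
  case (snoc x w) then show ?case
    by (simp add: tree_aut_append[OF assms(1)] tree_aut_append[OF assms(2)])
qed

definition portrait :: "('a list \<Rightarrow> 'a \<Rightarrow> 'a) \<Rightarrow> 'a list \<Rightarrow> 'a list" where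
  "portrait \<tau> w = map (\<lambda>j. \<tau> (take j w) (w ! j)) [0..<length w]"

lemma portrait_Nil [simp]: "portrait \<tau> [] = []"
  by (simp add: portrait_def)

lemma length_portrait [simp]: "length (portrait \<tau> w) = length w"
  by (simp add: portrait_def)

lemma portrait_append [simp]: "portrait \<tau> (w @ [x]) = portrait \<tau> w @ [\<tau> w x]"
proof -
  have "map (\<lambda>j. \<tau> (take j (w @ [x])) ((w @ [x]) ! j)) [0..<length w]
        = map (\<lambda>j. \<tau> (take j w) (w ! j)) [0..<length w]"
    by (rule map_cong) (auto simp: nth_append)
  then show ?thesis by (simp add: portrait_def)
qed

lemma bij_portrait:
  assumes "\<And>v. bij (\<tau> v)" shows "bij (portrait \<tau>)"
proof (rule bijI)
  have "\<forall>v. portrait \<tau> u = portrait \<tau> v \<longrightarrow> u = v" for u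
  proof (induction u rule: rev_induct)
    case Nil then show ?case by (metis length_0_conv length_portrait)
  next
    case (snoc x u)
    show ?case
    proof (intro allI impI)
      fix v assume e: "portrait \<tau> (u @ [x]) = portrait \<tau> v"
      then have "v \<noteq> []"
        by (metis length_portrait length_append_singleton length_0_conv nat.distinct(1))
      then obtain v' y where v: "v = v' @ [y]" by (cases v rule: rev_cases) auto
      with e have "portrait \<tau> u = portrait \<tau> v'" and \<tau>: "\<tau> u x = \<tau> v' y" by auto
      with snoc.IH have "u = v'" by blast
      with \<tau> have "x = y" by (simp add: inj_eq[OF bij_is_inj[OF assms]])
      with \<open>u = v'\<close> show "u @ [x] = v" by (simp add: v)
    qed
  qed
  then show "inj (portrait \<tau>)" by (simp add: inj_def)
  have "\<exists>w. portrait \<tau> w = y" for y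
  proof (induction y rule: rev_induct)
    case (snoc b y)
    then obtain w where w: "portrait \<tau> w = y" by blast
    obtain x where "b = \<tau> w x" using bij_is_surj[OF assms] by (metis surjD)
    then show ?case using w by (metis portrait_append)
  qed (metis portrait_Nil)
  then show "surj (portrait \<tau>)" unfolding surj_def by metis
qed

lemma tree_aut_portrait: "(\<And>v. bij (\<tau> v)) \<Longrightarrow> tree_aut (portrait \<tau>)"
  using bij_portrait by (auto simp: tree_aut_def)

lemma local_perm_portrait [simp]: "local_perm (portrait \<tau>) w = \<tau> w"
  by (simp add: local_perm_def fun_eq_iff)

text \<open>By induction on \<open>w\<close>, the multiplier \<open>u\<close> fixes \<open>w\<close>, so \<open>\<tau>' w \<in> \<tau> w D\<close> for every \<open>w\<close>.\<close>

lemma portrait_left_coset_eq: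
  assumes inj: "\<And>v. inj (\<tau> v)" and u: "tree_aut u" "\<And>w. local_perm u w \<in> D"
    and eq: "portrait \<tau>' = portrait \<tau> \<circ> u"
    and reps: "\<And>v \<delta>. \<delta> \<in> D \<Longrightarrow> \<tau>' v = \<tau> v \<circ> \<delta> \<Longrightarrow> \<tau>' v = \<tau> v"
  shows "\<tau>' = \<tau>"
proof -
  have step: "\<tau>' w = \<tau> w \<circ> local_perm u w" if "u w = w" for w
  proof
    fix x
    have "portrait \<tau>' (w @ [x]) = portrait \<tau> (u (w @ [x]))" using eq by simp
    then show "\<tau>' w x = (\<tau> w \<circ> local_perm u w) x"
      using that by (simp add: tree_aut_append[OF u(1)])
  qed
  have fixes_all: "u w = w" for w
  proof (induction w rule: rev_induct)
    case Nil then show ?case using tree_aut_Nil[OF u(1)] .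
  next
    case (snoc x w)
    have decomp: "\<tau>' w = \<tau> w \<circ> local_perm u w" using step[OF snoc] .
    then have "\<tau>' w = \<tau> w" using reps u(2) by blast
    with decomp have "\<tau> w (local_perm u w x) = \<tau> w x" by (metis comp_apply)
    then have "local_perm u w x = x" using inj by (simp add: inj_eq)
    then show ?case using snoc by (simp add: tree_aut_append[OF u(1)])
  qed
  show ?thesis
  proof
    fix w show "\<tau>' w = \<tau> w" using step[OF fixes_all] reps u(2) by blast
  qed
qed

lemma perm_groupD:
  assumes "perm_group H"
  shows "f \<in> H \<Longrightarrow> bij f" "id \<in> H" "f \<in> H \<Longrightarrow> g \<in> H \<Longrightarrow> f \<circ> g \<in> H" "f \<in> H \<Longrightarrow> inv f \<in> H"
  using assms unfolding perm_group_def by auto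

lemma tree_aut_Ln: "g \<in> Ln D D' n \<Longrightarrow> tree_aut g"
  by (simp add: Ln_def)

lemma id_in_Ln: "perm_group D \<Longrightarrow> perm_group D' \<Longrightarrow> id \<in> Ln D D' n"
  using perm_groupD(2)[of D] perm_groupD(2)[of D'] by (simp add: Ln_def tree_aut_id)

lemma Ln_comp:
  assumes D: "perm_group D" and D': "perm_group D'" and g: "g \<in> Ln D D' n" and h: "h \<in> Ln D D' n"
  shows "g \<circ> h \<in> Ln D D' n"
proof -
  have t: "tree_aut g" "tree_aut h" using g h by (simp_all add: Ln_def)
  have "local_perm (g \<circ> h) w \<in> D'" for w
    using g h perm_groupD(3)[OF D'] by (simp add: local_perm_comp[OF t] Ln_def)
  moreover have "local_perm (g \<circ> h) w \<in> D" if "n \<le> length w" for w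
    using g h that perm_groupD(3)[OF D]
      by (simp add: local_perm_comp[OF t] length_tree_aut[OF t(2)] Ln_def)
  ultimately show ?thesis using tree_aut_comp[OF t] by (simp add: Ln_def)
qed

lemma Ln_inv:
  fixes g :: "'a::finite list \<Rightarrow> 'a list"
  assumes D: "perm_group D" and D': "perm_group D'" and g: "g \<in> Ln D D' n"
  shows "inv g \<in> Ln D D' n"
proof -
  have t: "tree_aut g" using g by (simp add: Ln_def)
  have "local_perm (inv g) w \<in> D'" for w
    using g perm_groupD(4)[OF D'] by (simp add: local_perm_inv[OF t] Ln_def)
  moreover have "local_perm (inv g) w \<in> D" if "n \<le> length w" for w
    using g that perm_groupD(4)[OF D] length_tree_aut[OF tree_aut_inv[OF t]]
    by (simp add: local_perm_inv[OF t] Ln_def)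
  ultimately show ?thesis using tree_aut_inv[OF t] by (simp add: Ln_def)
qed

lemma Ln_mono: "n \<le> n' \<Longrightarrow> E \<subseteq> D \<Longrightarrow> E' \<subseteq> D' \<Longrightarrow> Ln E E' n \<subseteq> Ln D D' n'"
  by (auto simp: Ln_def)

lemma L0_eq_Ln: "L0 D = Ln D D 0"
  by (auto simp: L0_def Ln_def)

lemma LDD_comp:
  assumes "perm_group D" "perm_group D'" "g \<in> LDD D D'" "h \<in> LDD D D'"
  shows "g \<circ> h \<in> LDD D D'"
proof -
  obtain n n' where "g \<in> Ln D D' n" "h \<in> Ln D D' n'" using assms(3,4) by (auto simp: LDD_def)
  then have "g \<in> Ln D D' (max n n')" "h \<in> Ln D D' (max n n')"
    using Ln_mono[of n "max n n'" D D D' D'] Ln_mono[of n' "max n n'" D D D' D'] by auto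
  then show ?thesis using Ln_comp[OF assms(1,2)] by (auto simp: LDD_def)
qed

lemma LDD_inv:
  fixes g :: "'a::finite list \<Rightarrow> 'a list"
  shows "perm_group D \<Longrightarrow> perm_group D' \<Longrightarrow> g \<in> LDD D D' \<Longrightarrow> inv g \<in> LDD D D'"
  using Ln_inv by (fastforce simp: LDD_def)

lemma pmult_apply [simp]: "pmult f g i = f i \<circ> g i"
  by (simp add: pmult_def)

lemma pinv_apply [simp]: "pinv f i = inv (f i)"
  by (simp add: pinv_def)

lemma pone_apply [simp]: "pone i = id"
  by (simp add: pone_def)

lemma tree_aut_Lpow: "f \<in> Lpow D D' k \<Longrightarrow> tree_aut (f i)"
  by (cases "i < k") (auto simp: Lpow_def LDD_def Ln_def tree_aut_id)

definition Lpow_group :: "('a \<Rightarrow> 'a) set \<Rightarrow> ('a \<Rightarrow> 'a) set \<Rightarrow> nat \<Rightarrow> (nat \<Rightarrow> 'a list \<Rightarrow> 'a list) monoid" where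
  "Lpow_group D D' k = \<lparr>carrier = Lpow D D' k, mult = pmult, one = pone\<rparr>"

lemma Lpow_group_simps [simp]:
  "carrier (Lpow_group D D' k) = Lpow D D' k"
  "mult (Lpow_group D D' k) = pmult"
  "one (Lpow_group D D' k) = pone"
  by (simp_all add: Lpow_group_def)

lemma pinv_pmult_cancel: "f \<in> Lpow D D' k \<Longrightarrow> pmult (pinv f) f = pone"
  using tree_aut_Lpow by (fastforce simp: fun_eq_iff tree_aut_def bij_is_inj)

lemma group_Lpow_group:
  fixes D D' :: "('a::finite \<Rightarrow> 'a) set"
  assumes "perm_group D" "perm_group D'"
  shows "group (Lpow_group D D' k)" (is "group ?G")
proof (rule groupI)
  show "f \<otimes>\<^bsub>?G\<^esub> g \<in> carrier ?G" if "f \<in> carrier ?G" "g \<in> carrier ?G" for f g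
    using that LDD_comp[OF assms] by (simp add: Lpow_def)
  show "\<one>\<^bsub>?G\<^esub> \<in> carrier ?G" using id_in_Ln[OF assms] by (auto simp: Lpow_def LDD_def)
  show "x \<otimes>\<^bsub>?G\<^esub> y \<otimes>\<^bsub>?G\<^esub> z = x \<otimes>\<^bsub>?G\<^esub> (y \<otimes>\<^bsub>?G\<^esub> z)" for x y z
    by (simp add: pmult_def comp_assoc)
  show "\<one>\<^bsub>?G\<^esub> \<otimes>\<^bsub>?G\<^esub> x = x" for x
    by (simp add: pmult_def pone_def)
  show "\<exists>y\<in>carrier ?G. y \<otimes>\<^bsub>?G\<^esub> x = \<one>\<^bsub>?G\<^esub>" if "x \<in> carrier ?G" for x
  proof
    show "pinv x \<in> carrier ?G" using that LDD_inv[OF assms] by (simp add: Lpow_def)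
  qed (use that pinv_pmult_cancel in simp)
qed

lemma m_inv_Lpow_group:
  fixes D D' :: "('a::finite \<Rightarrow> 'a) set"
  assumes "perm_group D" "perm_group D'" "f \<in> Lpow D D' k"
  shows "m_inv (Lpow_group D D' k) f = pinv f"
proof (rule group.inv_equality[OF group_Lpow_group[OF assms(1,2)]])
  show "pinv f \<in> carrier (Lpow_group D D' k)"
    using assms LDD_inv[OF assms(1,2)] by (simp add: Lpow_def)
qed (use assms pinv_pmult_cancel in simp_all)

definition Lnpow :: "('a \<Rightarrow> 'a) set \<Rightarrow> ('a \<Rightarrow> 'a) set \<Rightarrow> nat \<Rightarrow> nat \<Rightarrow> (nat \<Rightarrow> 'a list \<Rightarrow> 'a list) set" where
  "Lnpow D D' k n = {f. (\<forall>i<k. f i \<in> Ln D D' n) \<and> (\<forall>i. k \<le> i \<longrightarrow> f i = id)}"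

lemma tree_aut_Lnpow: "f \<in> Lnpow D D' k n \<Longrightarrow> tree_aut (f i)"
  by (cases "i < k") (auto simp: Lnpow_def Ln_def tree_aut_id)

lemma pone_in_Lnpow:
  assumes "perm_group D" "perm_group D'" shows "pone \<in> Lnpow D D' k n"
  using id_in_Ln[OF assms] by (simp add: Lnpow_def)

lemma Vnbhd_0_eq_Lnpow: "Vnbhd D k 0 = Lnpow D D k 0"
  by (auto simp: Vnbhd_def Lnpow_def L0_eq_Ln intro: tree_aut_Nil[OF tree_aut_Ln])

lemma subgroup_Lnpow:
  fixes D D' :: "('a::finite \<Rightarrow> 'a) set"
  assumes "perm_group D" "perm_group D'" "perm_group E" "perm_group E'" "E \<subseteq> D" "E' \<subseteq> D'"
  shows "subgroup (Lnpow E E' k n) (Lpow_group D D' k)"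
proof
  show sub: "Lnpow E E' k n \<subseteq> carrier (Lpow_group D D' k)"
    using Ln_mono[OF order_refl assms(5,6)] by (fastforce simp: Lnpow_def Lpow_def LDD_def)
  show "f \<otimes>\<^bsub>Lpow_group D D' k\<^esub> g \<in> Lnpow E E' k n" if "f \<in> Lnpow E E' k n" "g \<in> Lnpow E E' k n" for f g
    using that Ln_comp[OF assms(3,4)] by (simp add: Lnpow_def)
  show "\<one>\<^bsub>Lpow_group D D' k\<^esub> \<in> Lnpow E E' k n" using id_in_Ln[OF assms(3,4)] by (simp add: Lnpow_def)
  show "m_inv (Lpow_group D D' k) f \<in> Lnpow E E' k n" if "f \<in> Lnpow E E' k n" for f
    using that sub m_inv_Lpow_group[OF assms(1,2)] Ln_inv[OF assms(3,4)] by (auto simp: Lnpow_def)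
qed

lemma subgroup_Lpow_group_if_is_subgroup:
  fixes D D' :: "('a::finite \<Rightarrow> 'a) set"
  assumes "perm_group D" "perm_group D'" "is_subgroup D D' k \<Gamma>"
  shows "subgroup \<Gamma> (Lpow_group D D' k)"
  using assms m_inv_Lpow_group[OF assms(1,2)] by (auto simp: is_subgroup_def intro!: subgroup.intro)

lemma openin_Ltop:
  "openin (Ltop D D' k) S \<longleftrightarrow> S \<subseteq> Lpow D D' k \<and> (\<forall>g\<in>S. \<exists>m. pmult g ` Vnbhd D k m \<subseteq> S)"
proof -
  let ?open = "\<lambda>S. S \<subseteq> Lpow D D' k \<and> (\<forall>g\<in>S. \<exists>m. pmult g ` Vnbhd D k m \<subseteq> S)"
  have "istopology ?open" unfolding istopology_def
  proof (rule conjI; intro allI impI)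
    fix S T assume S: "?open S" and T: "?open T"
    show "?open (S \<inter> T)"
    proof (intro conjI ballI)
      show "S \<inter> T \<subseteq> Lpow D D' k" using S by blast
      fix g assume "g \<in> S \<inter> T"
      then obtain m m' where "pmult g ` Vnbhd D k m \<subseteq> S" "pmult g ` Vnbhd D k m' \<subseteq> T"
        using S T by blast
      moreover have "Vnbhd D k (max m m') \<subseteq> Vnbhd D k m" "Vnbhd D k (max m m') \<subseteq> Vnbhd D k m'"
        by (auto simp: Vnbhd_def)
      ultimately show "\<exists>m. pmult g ` Vnbhd D k m \<subseteq> S \<inter> T" by blast
    qed
  next
    fix K assume K: "\<forall>S\<in>K. ?open S"
    show "?open (\<Union>K)"
    proof (intro conjI ballI)
      show "\<Union>K \<subseteq> Lpow D D' k" using K by blast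
      fix g assume "g \<in> \<Union>K"
      then obtain S where "S \<in> K" "g \<in> S" by blast
      then obtain m where "pmult g ` Vnbhd D k m \<subseteq> S" using K by blast
      then show "\<exists>m. pmult g ` Vnbhd D k m \<subseteq> \<Union>K" using \<open>S \<in> K\<close> by blast
    qed
  qed
  then show ?thesis by (simp add: Ltop_def)
qed

lemma discrete_subgroup_avoids_Vnbhd:
  assumes "is_subgroup D D' k \<Gamma>" "is_discrete D D' k \<Gamma>"
  obtains m where "\<Gamma> \<inter> Vnbhd D k m \<subseteq> {pone}"
proof -
  have "pone \<in> \<Gamma>" using assms(1) by (simp add: is_subgroup_def)
  then obtain S where S: "openin (Ltop D D' k) S" "S \<inter> \<Gamma> = {pone}"
    using assms(2) unfolding is_discrete_def by blast
  then have "pone \<in> S" by blast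
  moreover have "\<forall>g\<in>S. \<exists>m. pmult g ` Vnbhd D k m \<subseteq> S" using S(1) by (simp add: openin_Ltop)
  ultimately obtain m where "pmult pone ` Vnbhd D k m \<subseteq> S" by blast
  moreover have "pmult pone f = f" for f :: "nat \<Rightarrow> 'a list \<Rightarrow> 'a list" by (simp add: fun_eq_iff)
  ultimately have "Vnbhd D k m \<subseteq> S" by simp
  then have "\<Gamma> \<inter> Vnbhd D k m \<subseteq> {pone}" using S(2) by blast
  then show ?thesis by (rule that)
qed

section \<open>Essential subgroups and coset representatives\<close>

lemma essential_subgroupD:
  "essential_subgroup D D' \<Longrightarrow> perm_group H \<Longrightarrow> H \<subseteq> D' \<Longrightarrow> H \<noteq> {id} \<Longrightarrow> H \<inter> D \<noteq> {id}"
  by (simp add: essential_subgroup_def)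

definition pointwise_subgroup :: "'b set \<Rightarrow> ('b \<Rightarrow> 'a \<Rightarrow> 'a) set \<Rightarrow> bool" where
  "pointwise_subgroup V P \<longleftrightarrow> (\<lambda>_. id) \<in> P \<and>
     (\<forall>p\<in>P. \<forall>q\<in>P. \<exists>r\<in>P. \<forall>v\<in>V. r v = p v \<circ> q v) \<and> (\<forall>p\<in>P. \<exists>r\<in>P. \<forall>v\<in>V. r v = inv (p v))"

lemma pointwise_subgroup_insert_filter:
  assumes P: "pointwise_subgroup (insert t V) P" and D: "perm_group D"
  shows "pointwise_subgroup V {p \<in> P. p t \<in> D}"
  unfolding pointwise_subgroup_def
proof (intro conjI ballI)
  show "(\<lambda>_. id) \<in> {p \<in> P. p t \<in> D}" using P perm_groupD(2)[OF D] unfolding pointwise_subgroup_def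
    by blast
next
  fix p q assume p: "p \<in> {p \<in> P. p t \<in> D}" and q: "q \<in> {p \<in> P. p t \<in> D}"
  then obtain r where r: "r \<in> P" "\<forall>v\<in>insert t V. r v = p v \<circ> q v"
    using P unfolding pointwise_subgroup_def by blast
  moreover have "p t \<circ> q t \<in> D" using p q perm_groupD(3)[OF D] by blast
  ultimately have "r \<in> {p \<in> P. p t \<in> D}" by simp
  with r(2) show "\<exists>r\<in>{p \<in> P. p t \<in> D}. \<forall>v\<in>V. r v = p v \<circ> q v" by blast
next
  fix p assume p: "p \<in> {p \<in> P. p t \<in> D}"
  then obtain r where r: "r \<in> P" "\<forall>v\<in>insert t V. r v = inv (p v)"
    using P unfolding pointwise_subgroup_def by blast
  moreover have "inv (p t) \<in> D" using p perm_groupD(4)[OF D] by blast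
  ultimately have "r \<in> {p \<in> P. p t \<in> D}" by simp
  with r(2) show "\<exists>r\<in>{p \<in> P. p t \<in> D}. \<forall>v\<in>V. r v = inv (p v)" by blast
qed

lemma perm_group_evaluation:
  assumes P: "pointwise_subgroup V P" and "t \<in> V" and D': "perm_group D'" and in_D': "\<forall>p\<in>P. p t \<in> D'"
  shows "perm_group ((\<lambda>p. p t) ` P)"
  unfolding perm_group_def
proof (intro conjI ballI subsetI)
  show "f \<in> {f. bij f}" if "f \<in> (\<lambda>p. p t) ` P" for f
    using that in_D' perm_groupD(1)[OF D'] by blast
  have "(\<lambda>_. id) \<in> P" using P unfolding pointwise_subgroup_def by blast
  then show "id \<in> (\<lambda>p. p t) ` P" by (rule rev_image_eqI) simp
next
  fix f g assume "f \<in> (\<lambda>p. p t) ` P" "g \<in> (\<lambda>p. p t) ` P"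
  then obtain p q where "p \<in> P" "q \<in> P" "f = p t" "g = q t" by blast
  then obtain r where "r \<in> P" "r t = f \<circ> g" using P \<open>t \<in> V\<close> unfolding pointwise_subgroup_def by metis
  then show "f \<circ> g \<in> (\<lambda>p. p t) ` P" by (metis image_eqI)
next
  fix f assume "f \<in> (\<lambda>p. p t) ` P"
  then obtain p where "p \<in> P" "f = p t" by blast
  then obtain r where "r \<in> P" "r t = inv f" using P \<open>t \<in> V\<close> unfolding pointwise_subgroup_def by metis
  then show "inv f \<in> (\<lambda>p. p t) ` P" by (metis image_eqI)
qed

text \<open>Induction on \<open>V\<close>: the evaluations at a new point \<open>t\<close>
  form a subgroup of \<open>D'\<close> which meets \<open>D\<close> trivially, by induction hypothesis.\<close>

lemma essential_subgroup_power:
  assumes ess: "essential_subgroup D D'" and D: "perm_group D" and D': "perm_group D'"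
    and "finite V" and "pointwise_subgroup V P" and "\<forall>p\<in>P. \<forall>v\<in>V. p v \<in> D'"
    and "\<forall>p\<in>P. (\<forall>v\<in>V. p v \<in> D) \<longrightarrow> (\<forall>v\<in>V. p v = id)"
  shows "\<forall>p\<in>P. \<forall>v\<in>V. p v = id"
  using assms(4-)
proof (induction V arbitrary: P rule: finite_induct)
  case empty show ?case by simp
next
  case (insert t V P)
  define P\<^sub>D where "P\<^sub>D = {p \<in> P. p t \<in> D}"
  have "\<forall>p\<in>P\<^sub>D. \<forall>v\<in>V. p v = id"
  proof (rule insert.IH)
    show "pointwise_subgroup V P\<^sub>D"
      unfolding P\<^sub>D_def using insert.prems(1) D by (rule pointwise_subgroup_insert_filter)
    show "\<forall>p\<in>P\<^sub>D. \<forall>v\<in>V. p v \<in> D'" using insert.prems(2) unfolding P\<^sub>D_def by blast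
    show "\<forall>p\<in>P\<^sub>D. (\<forall>v\<in>V. p v \<in> D) \<longrightarrow> (\<forall>v\<in>V. p v = id)"
      using insert.prems(3) unfolding P\<^sub>D_def by blast
  qed
  have "\<forall>p\<in>P\<^sub>D. \<forall>v\<in>insert t V. p v \<in> D"
  proof (intro ballI)
    fix p v assume "p \<in> P\<^sub>D" "v \<in> insert t V"
    show "p v \<in> D"
    proof (cases "v = t")
      case False
      then have "p v = id" using \<open>\<forall>p\<in>P\<^sub>D. \<forall>v\<in>V. p v = id\<close> \<open>p \<in> P\<^sub>D\<close> \<open>v \<in> insert t V\<close> by blast
      then show ?thesis using perm_groupD(2)[OF D] by (simp only:)
    qed (use \<open>p \<in> P\<^sub>D\<close> in \<open>simp add: P\<^sub>D_def\<close>)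
  qed
  then have P\<^sub>D_trivial: "\<forall>p\<in>P\<^sub>D. \<forall>v\<in>insert t V. p v = id"
    using insert.prems(3) unfolding P\<^sub>D_def by blast
  define H where "H = (\<lambda>p. p t) ` P"
  have "perm_group H"
    unfolding H_def using insert.prems(1) _ D'
      by (rule perm_group_evaluation) (use insert.prems(2) in blast)+
  moreover have "H \<subseteq> D'" using insert.prems(2) unfolding H_def by blast
  moreover have "H \<inter> D = {id}"
    using P\<^sub>D_trivial \<open>perm_group H\<close> perm_groupD(2)[OF D] perm_groupD(2)[of H]
      unfolding H_def P\<^sub>D_def by blast
  ultimately have "H = {id}" using essential_subgroupD[OF ess] by blast
  have "p t \<in> D" if "p \<in> P" for p
  proof -
    have "p t \<in> H" unfolding H_def using that by (rule imageI)
    then have "p t = id" using \<open>H = {id}\<close> by blast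
    then show ?thesis using perm_groupD(2)[OF D] by (simp only:)
  qed
  then have "P\<^sub>D = P" unfolding P\<^sub>D_def by blast
  then show ?case using P\<^sub>D_trivial by simp
qed

definition distinct_left_cosets :: "('g \<Rightarrow> 'g \<Rightarrow> 'g) \<Rightarrow> 'g set \<Rightarrow> 'g set \<Rightarrow> bool" where
  "distinct_left_cosets f H R \<longleftrightarrow> (\<forall>r\<in>R. \<forall>r'\<in>R. \<forall>h\<in>H. r' = f r h \<longrightarrow> r = r')"

lemma distinct_left_cosetsD:
  "distinct_left_cosets f H R \<Longrightarrow> r \<in> R \<Longrightarrow> r' \<in> R \<Longrightarrow> h \<in> H \<Longrightarrow> r' = f r h \<Longrightarrow> r = r'"
  by (auto simp: distinct_left_cosets_def)

lemma distinct_left_cosets_subset: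
  "distinct_left_cosets f H R \<Longrightarrow> R' \<subseteq> R \<Longrightarrow> distinct_left_cosets f H R'"
  by (auto simp: distinct_left_cosets_def)

lemma left_coset_comp:
  assumes D: "perm_group D" and "\<delta> \<in> D" shows "(\<circ>) (q \<circ> \<delta>) ` D = (\<circ>) q ` D"
proof -
  have subset: "(\<circ>) (q \<circ> \<delta>) ` D \<subseteq> (\<circ>) q ` D" if "\<delta> \<in> D" for q \<delta>
    using that perm_groupD(3)[OF D] by (auto simp: comp_assoc)
  have "q = q \<circ> \<delta> \<circ> inv \<delta>"
    using perm_groupD(1)[OF D \<open>\<delta> \<in> D\<close>] by (metis bij_is_surj comp_assoc comp_id surj_iff)
  then have "(\<circ>) q ` D \<subseteq> (\<circ>) (q \<circ> \<delta>) ` D"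
    using subset[OF perm_groupD(4)[OF D \<open>\<delta> \<in> D\<close>], of "q \<circ> \<delta>"] by simp
  with subset[OF \<open>\<delta> \<in> D\<close>] show ?thesis by (rule subset_antisym)
qed

lemma card_div_le_card_left_cosets:
  fixes D D' :: "('a::finite \<Rightarrow> 'a) set"
  assumes D: "perm_group D"
  shows "card D' div card D \<le> card ((\<lambda>q. (\<circ>) q ` D) ` D')"
proof -
  have "card D' \<le> card (\<Union>q\<in>D'. (\<circ>) q ` D)"
    using perm_groupD(2)[OF D] by (intro card_mono) (auto intro!: image_eqI[of _ _ id])
  also have "\<dots> \<le> (\<Sum>C\<in>(\<lambda>q. (\<circ>) q ` D) ` D'. card C)" by (rule card_Union_le_sum_card)
  also have "\<dots> \<le> (\<Sum>C\<in>(\<lambda>q. (\<circ>) q ` D) ` D'. card D)" by (intro sum_mono) (auto simp: card_image_le)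
  also have "\<dots> = card ((\<lambda>q. (\<circ>) q ` D) ` D') * card D" by simp
  finally have "card D' div card D \<le> card ((\<lambda>q. (\<circ>) q ` D) ` D') * card D div card D"
    by (rule div_le_mono)
  moreover have "finite D" by simp
  then have "0 < card D" using perm_groupD(2)[OF D] card_gt_0_iff by blast
  ultimately show ?thesis by simp
qed

lemma coset_representatives:
  fixes D D' :: "('a::finite \<Rightarrow> 'a) set"
  assumes D: "perm_group D"
  obtains Q where "Q \<subseteq> D'" "card D' div card D \<le> card Q" "distinct_left_cosets (\<circ>) D Q"
proof -
  define cosets where "cosets = (\<lambda>q. (\<circ>) q ` D) ` D'"
  define rep where "rep C = (SOME q. q \<in> D' \<and> (\<circ>) q ` D = C)" for C
  have rep: "rep C \<in> D' \<and> (\<circ>) (rep C) ` D = C" if "C \<in> cosets" for C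
  proof -
    have "\<exists>q. q \<in> D' \<and> (\<circ>) q ` D = C" using that unfolding cosets_def by blast
    then show ?thesis unfolding rep_def by (rule someI_ex)
  qed
  have "inj_on rep cosets"
  proof (rule inj_onI)
    fix C C' assume "C \<in> cosets" "C' \<in> cosets" "rep C = rep C'"
    from \<open>rep C = rep C'\<close> have "(\<circ>) (rep C) ` D = (\<circ>) (rep C') ` D" by (rule arg_cong)
    then show "C = C'" using rep[OF \<open>C \<in> cosets\<close>] rep[OF \<open>C' \<in> cosets\<close>] by (simp only:)
  qed
  show ?thesis
  proof
    show "rep ` cosets \<subseteq> D'" using rep by blast
    show "card D' div card D \<le> card (rep ` cosets)"
      using card_div_le_card_left_cosets[OF D, of D'] card_image[OF \<open>inj_on rep cosets\<close>]
      by (simp add: cosets_def)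
    show "distinct_left_cosets (\<circ>) D (rep ` cosets)" unfolding distinct_left_cosets_def
    proof (intro ballI impI)
      fix q q' \<delta> assume "q \<in> rep ` cosets" "q' \<in> rep ` cosets" "\<delta> \<in> D" "q' = q \<circ> \<delta>"
      then obtain C C' where "C \<in> cosets" "C' \<in> cosets" "q = rep C" "q' = rep C'" by blast
      then have "C' = (\<circ>) q' ` D" using rep[of C'] by simp
      also have "\<dots> = (\<circ>) q ` D" unfolding \<open>q' = q \<circ> \<delta>\<close> by (rule left_coset_comp[OF D \<open>\<delta> \<in> D\<close>])
      also have "\<dots> = C" using rep[OF \<open>C \<in> cosets\<close>] \<open>q = rep C\<close> by simp
      finally show "q = q'" using \<open>q = rep C\<close> \<open>q' = rep C'\<close> by simp
    qed
  qed
qed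

section \<open>Counting in double cosets\<close>

text \<open>If \<open>r = \<gamma>\<^sub>r g u\<^sub>r\<close> with \<open>\<gamma>\<^sub>r \<in> \<Gamma>\<close>, \<open>u\<^sub>r \<in> U\<close> for all \<open>r\<close> in a set \<open>R\<close> of elements of pairwise different left
  \<open>U\<close>-cosets, then \<open>(r, s) \<mapsto> \<gamma>\<^sub>r s \<gamma>\<^sub>r\<^sub>0\<inverse>\<close> embeds \<open>R \<times> (\<Gamma> \<inter> g U g\<inverse>)\<close> into \<open>\<Gamma> \<inter> X\<close> for every subgroup
  \<open>X \<supseteq> U \<union> R\<close>; the conjugating \<open>g\<close> cancels in \<open>\<gamma>\<^sub>r s \<gamma>\<^sub>r\<^sub>0\<inverse> = r u\<^sub>r\<inverse> v u\<^sub>r\<^sub>0 r\<^sub>0\<inverse>\<close> for \<open>s = g v g\<inverse>\<close>.\<close>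

lemma (in group) double_coset_embedding:
  assumes \<Gamma>: "subgroup \<Gamma> G" and U: "subgroup U G" and X: "subgroup X G"
    and "U \<subseteq> X" and "R \<subseteq> X" and g: "g \<in> carrier G"
    and decomp: "\<And>r. r \<in> R \<Longrightarrow> \<gamma> r \<in> \<Gamma> \<and> u r \<in> U \<and> r = \<gamma> r \<otimes> g \<otimes> u r"
    and distinct_cosets: "distinct_left_cosets (\<otimes>) U R" and r\<^sub>0: "r\<^sub>0 \<in> R"
  defines "S \<equiv> \<Gamma> \<inter> (\<lambda>v. g \<otimes> v \<otimes> m_inv G g) ` U"
    and "\<Phi> \<equiv> \<lambda>(r, s). \<gamma> r \<otimes> s \<otimes> m_inv G (\<gamma> r\<^sub>0)"
  shows "inj_on \<Phi> (R \<times> S)" and "\<Phi> ` (R \<times> S) \<subseteq> \<Gamma> \<inter> X"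
proof -
  have [simp]: "x \<in> \<Gamma> \<Longrightarrow> x \<in> carrier G" "x \<in> U \<Longrightarrow> x \<in> carrier G" "x \<in> X \<Longrightarrow> x \<in> carrier G" for x
    using \<Gamma> U X by (auto dest: subgroup.mem_carrier)
  have [simp]: "r \<in> R \<Longrightarrow> r \<in> carrier G" for r using \<open>R \<subseteq> X\<close> by auto
  have [simp]: "m_inv G x \<otimes> (x \<otimes> y) = y" "x \<otimes> (m_inv G x \<otimes> y) = y"
    if "x \<in> carrier G" "y \<in> carrier G" for x y
    using that by (simp_all add: m_assoc[symmetric])
  have \<gamma>\<Gamma>: "\<gamma> r \<in> \<Gamma>" and uU: "u r \<in> U" if "r \<in> R" for r
    using decomp[OF that] by blast+
  have \<gamma>_eq: "\<gamma> r = r \<otimes> m_inv G (u r) \<otimes> m_inv G g" if "r \<in> R" for r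
  proof -
    have r: "\<gamma> r \<otimes> g \<otimes> u r = r" using decomp[OF that] by (elim conjE) (rule sym)
    have "\<gamma> r \<otimes> g \<otimes> u r \<otimes> m_inv G (u r) \<otimes> m_inv G g = \<gamma> r"
      using \<gamma>\<Gamma>[OF that] uU[OF that] g by (simp add: m_assoc)
    then show ?thesis unfolding r by (rule sym)
  qed
  have \<gamma>_conj: "\<gamma> r \<otimes> (g \<otimes> v \<otimes> m_inv G g) = r \<otimes> m_inv G (u r) \<otimes> v \<otimes> m_inv G g"
    if "r \<in> R" "v \<in> U" for r v
    using that uU g by (simp add: \<gamma>_eq m_assoc)
  have "\<Phi> (r, s) \<in> \<Gamma> \<inter> X" if r: "r \<in> R" and "s \<in> S" for r s
  proof
    obtain v where v: "v \<in> U" "s \<in> \<Gamma>" "s = g \<otimes> v \<otimes> m_inv G g" using \<open>s \<in> S\<close> unfolding S_def by blast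
    show "\<Phi> (r, s) \<in> \<Gamma>" using \<gamma>\<Gamma> r r\<^sub>0 v \<Gamma> unfolding \<Phi>_def
      by (auto intro!: subgroup.m_closed subgroup.m_inv_closed)
    have "\<Phi> (r, s) = r \<otimes> (m_inv G (u r) \<otimes> (v \<otimes> (u r\<^sub>0 \<otimes> m_inv G r\<^sub>0)))"
      unfolding \<Phi>_def prod.case v(3) \<gamma>_conj[OF r v(1)] \<gamma>_eq[OF r\<^sub>0]
      using r r\<^sub>0 v(1) uU g by (simp add: m_assoc inv_mult_group)
    then show "\<Phi> (r, s) \<in> X"
      using r r\<^sub>0 v(1) uU \<open>U \<subseteq> X\<close> \<open>R \<subseteq> X\<close> X by (auto intro!: subgroup.m_closed subgroup.m_inv_closed)
  qed
  then show "\<Phi> ` (R \<times> S) \<subseteq> \<Gamma> \<inter> X" by auto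
  show "inj_on \<Phi> (R \<times> S)"
  proof (clarsimp simp: inj_on_def)
    fix r s r' s' assume r: "r \<in> R" "r' \<in> R" and "s \<in> S" "s' \<in> S" and e: "\<Phi> (r, s) = \<Phi> (r', s')"
    then obtain v v' where v: "v \<in> U" "s \<in> \<Gamma>" "s = g \<otimes> v \<otimes> m_inv G g"
      and v': "v' \<in> U" "s' \<in> \<Gamma>" "s' = g \<otimes> v' \<otimes> m_inv G g" unfolding S_def by blast
    have e': "\<gamma> r \<otimes> s = \<gamma> r' \<otimes> s'" using e \<gamma>\<Gamma> r r\<^sub>0 v v' unfolding \<Phi>_def by simp
    then have "r \<otimes> m_inv G (u r) \<otimes> v = r' \<otimes> m_inv G (u r') \<otimes> v'"
      using \<gamma>_conj[OF r(1) v(1)] \<gamma>_conj[OF r(2) v'(1)] v v' r uU g by simp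
    then have "r \<otimes> (m_inv G (u r) \<otimes> v \<otimes> m_inv G v' \<otimes> u r')
        = r' \<otimes> m_inv G (u r') \<otimes> v' \<otimes> (m_inv G v' \<otimes> u r')"
      using r uU v v' by (simp add: m_assoc[symmetric])
    then have "r' = r \<otimes> (m_inv G (u r) \<otimes> v \<otimes> m_inv G v' \<otimes> u r')"
      using r uU v v' by (simp add: m_assoc)
    moreover have "m_inv G (u r) \<otimes> v \<otimes> m_inv G v' \<otimes> u r' \<in> U"
      using r uU v v' U by (auto intro!: subgroup.m_closed subgroup.m_inv_closed)
    ultimately have "r = r'" using distinct_left_cosetsD[OF distinct_cosets] r by blast
    with e' show "r = r' \<and> s = s'" using \<gamma>\<Gamma> r v v' by simp
  qed
qed

lemma (in group) card_double_coset_reps_le: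
  assumes \<Gamma>: "subgroup \<Gamma> G" and U: "subgroup U G" and X: "subgroup X G"
    and "U \<subseteq> X" and "R \<subseteq> X" and g: "g \<in> carrier G"
    and in_dcoset: "\<And>r. r \<in> R \<Longrightarrow> \<exists>\<gamma>\<in>\<Gamma>. \<exists>u\<in>U. r = \<gamma> \<otimes> g \<otimes> u"
    and distinct_cosets: "distinct_left_cosets (\<otimes>) U R"
    and fin: "finite (\<Gamma> \<inter> X)" and r\<^sub>0: "r\<^sub>0 \<in> R"
  shows "finite (\<Gamma> \<inter> (\<lambda>v. g \<otimes> v \<otimes> m_inv G g) ` U)"
    and "card R * card (\<Gamma> \<inter> (\<lambda>v. g \<otimes> v \<otimes> m_inv G g) ` U) \<le> card (\<Gamma> \<inter> X)"
proof -
  have "\<exists>P. \<forall>r\<in>R. fst (P r) \<in> \<Gamma> \<and> snd (P r) \<in> U \<and> r = fst (P r) \<otimes> g \<otimes> snd (P r)"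
    by (rule bchoice) (use in_dcoset in fastforce)
  then obtain P where "\<And>r. r \<in> R \<Longrightarrow> fst (P r) \<in> \<Gamma> \<and> snd (P r) \<in> U \<and> r = fst (P r) \<otimes> g \<otimes> snd (P r)"
    by blast
  note embedding = double_coset_embedding[OF \<Gamma> U X \<open>U \<subseteq> X\<close> \<open>R \<subseteq> X\<close> g this distinct_cosets r\<^sub>0]
  have finite_product: "finite (R \<times> (\<Gamma> \<inter> (\<lambda>v. g \<otimes> v \<otimes> m_inv G g) ` U))"
    by (rule inj_on_finite[OF embedding fin])
  have card: "card (R \<times> (\<Gamma> \<inter> (\<lambda>v. g \<otimes> v \<otimes> m_inv G g) ` U)) \<le> card (\<Gamma> \<inter> X)"
    by (rule card_inj_on_le[OF embedding fin])
  show "finite (\<Gamma> \<inter> (\<lambda>v. g \<otimes> v \<otimes> m_inv G g) ` U)"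
    using finite_product r\<^sub>0 by (auto simp: finite_cartesian_product_iff)
  show "card R * card (\<Gamma> \<inter> (\<lambda>v. g \<otimes> v \<otimes> m_inv G g) ` U) \<le> card (\<Gamma> \<inter> X)"
    using card by (simp add: card_cartesian_product)
qed

section \<open>Many left cosets of \<open>L\<^sub>0\<^sup>k\<close> in \<open>(L\<^sub>n\<^sub>+\<^sub>1)\<^sup>k\<close>\<close>

definition words_below :: "nat \<Rightarrow> 'a list set" where
  "words_below n = {w. length w < n}"

lemma finite_words_below: "finite (words_below n :: 'a::finite list set)"
proof -
  have "words_below n \<subseteq> {w :: 'a list. set w \<subseteq> UNIV \<and> length w \<le> n}" by (auto simp: words_below_def)
  then show ?thesis using finite_lists_length_le[of "UNIV :: 'a set" n] finite_subset by auto
qed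

lemma words_below_Suc: "words_below (Suc n) = insert [] (case_prod Cons ` (UNIV \<times> words_below n))"
proof -
  have "w \<in> words_below (Suc n) \<longleftrightarrow> w \<in> insert [] (case_prod Cons ` (UNIV \<times> words_below n))"
    for w :: "'a list"
    by (cases w) (auto simp: words_below_def image_iff)
  then show ?thesis by blast
qed

lemma card_words_below_Suc:
  "card (words_below (Suc n) :: 'a::finite list set) = 1 + CARD('a) * card (words_below n :: 'a list set)"
proof -
  have "inj_on (case_prod Cons) (UNIV \<times> (words_below n :: 'a list set))"
    by (auto simp: inj_on_def)
  then have "card (case_prod Cons ` (UNIV \<times> (words_below n :: 'a list set)))
      = CARD('a) * card (words_below n :: 'a list set)"
    by (simp add: card_image card_cartesian_product)
  moreover have "finite (case_prod Cons ` (UNIV \<times> (words_below n :: 'a list set)))"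
    using finite_words_below[where 'a='a, of n] by simp
  moreover have "[] \<notin> case_prod Cons ` (UNIV \<times> (words_below n :: 'a list set))" by auto
  ultimately show ?thesis unfolding words_below_Suc by simp
qed

lemma card_words_below_ge: "n \<le> card (words_below n :: 'a::finite list set)"
proof (induction n)
  case (Suc n)
  have "card (words_below n :: 'a list set) \<le> CARD('a) * card (words_below n :: 'a list set)" by simp
  then show ?case using Suc card_words_below_Suc[where 'a='a, of n] by linarith
qed simp

definition truncated_portraits :: "nat \<Rightarrow> nat \<Rightarrow> (nat \<times> 'a list \<Rightarrow> 'a \<Rightarrow> 'a) \<Rightarrow> nat \<Rightarrow> 'a list \<Rightarrow> 'a list" where
  "truncated_portraits k n c i =
     (if i < k then portrait (\<lambda>w. if length w \<le> n then c (i, w) else id) else id)"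

lemma truncated_portraits_in_Lnpow:
  assumes D: "perm_group D" and D': "perm_group D'" and c: "\<And>i w. i < k \<Longrightarrow> length w \<le> n \<Longrightarrow> c (i, w) \<in> D'"
  shows "truncated_portraits k n c \<in> Lnpow D D' k (Suc n)"
proof -
  have "portrait (\<lambda>w. if length w \<le> n then c (i, w) else id) \<in> Ln D D' (Suc n)" if "i < k" for i
  proof -
    have in_D': "(if length w \<le> n then c (i, w) else id) \<in> D'" for w
      using c[OF that] perm_groupD(2)[OF D'] by simp
    have "tree_aut (portrait (\<lambda>w. if length w \<le> n then c (i, w) else id))"
      using perm_groupD(1)[OF D' in_D'] by (rule tree_aut_portrait)
    moreover have "(if length w \<le> n then c (i, w) else id) \<in> D" if "Suc n \<le> length w" for w
      using that perm_groupD(2)[OF D] by simp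
    ultimately show ?thesis using in_D' unfolding Ln_def mem_Collect_eq local_perm_portrait by blast
  qed
  then show ?thesis by (simp add: Lnpow_def truncated_portraits_def)
qed

lemma truncated_portraits_left_coset_eq:
  assumes D': "perm_group D'" and "Q \<subseteq> D'" and reps: "distinct_left_cosets (\<circ>) D Q"
    and c: "\<And>i w. i < k \<Longrightarrow> length w \<le> n \<Longrightarrow> c (i, w) \<in> Q \<and> c' (i, w) \<in> Q"
    and u: "u \<in> Vnbhd D k 0" and eq: "truncated_portraits k n c' = pmult (truncated_portraits k n c) u"
    and "i < k" "length w \<le> n"
  shows "c' (i, w) = c (i, w)"
proof -
  define \<tau> where "\<tau> c i = (\<lambda>w. if length w \<le> n then c (i, w) else id)"
    for c :: "nat \<times> 'a list \<Rightarrow> 'a \<Rightarrow> 'a" and i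
  have "\<tau> c' i = \<tau> c i"
  proof (rule portrait_left_coset_eq)
    have "\<tau> c i v \<in> D'" for v using c[OF \<open>i < k\<close>] \<open>Q \<subseteq> D'\<close> perm_groupD(2)[OF D'] by (auto simp: \<tau>_def)
    then show "inj (\<tau> c i v)" for v using perm_groupD(1)[OF D'] bij_is_inj by blast
    have "u i \<in> L0 D" using u \<open>i < k\<close> by (simp add: Vnbhd_def)
    then show "tree_aut (u i)" "local_perm (u i) v \<in> D" for v by (simp_all add: L0_def)
    show "portrait (\<tau> c' i) = portrait (\<tau> c i) \<circ> u i"
      using fun_cong[OF eq, of i] \<open>i < k\<close> by (simp add: truncated_portraits_def \<tau>_def)
    show "\<tau> c' i v = \<tau> c i v" if "\<delta> \<in> D" "\<tau> c' i v = \<tau> c i v \<circ> \<delta>" for v \<delta>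
      using that c[OF \<open>i < k\<close>, of v] distinct_left_cosetsD[OF reps, of "c (i, v)" "c' (i, v)" \<delta>]
      by (cases "length v \<le> n") (simp_all add: \<tau>_def)
  qed
  then have "\<tau> c' i w = \<tau> c i w" by simp
  then show ?thesis using \<open>length w \<le> n\<close> by (simp add: \<tau>_def)
qed

text \<open>\<open>R\<close> consists of truncated portraits with local permutations in \<open>Q\<close>.\<close>

lemma Lnpow_distinct_cosets:
  fixes D D' :: "('a::finite \<Rightarrow> 'a) set"
  assumes D: "perm_group D" and D': "perm_group D'" and "Q \<subseteq> D'"
    and reps: "distinct_left_cosets (\<circ>) D Q"
  obtains R where "R \<subseteq> Lnpow D D' k (Suc n)" "finite R"
    "card R = card Q ^ (k * card (words_below (Suc n) :: 'a list set))"
    "distinct_left_cosets pmult (Vnbhd D k 0) R"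
proof -
  define I where "I = {..<k} \<times> (words_below (Suc n) :: 'a list set)"
  define C where "C = Pi\<^sub>E I (\<lambda>_. Q)"
  have in_Q: "c (i, w) \<in> Q" if "c \<in> C" "i < k" "length w \<le> n" for c i w
    using that unfolding C_def I_def words_below_def by auto
  have coset_eq: "c' = c"
    if c: "c \<in> C" "c' \<in> C" and "u \<in> Vnbhd D k 0"
      and "truncated_portraits k n c' = pmult (truncated_portraits k n c) u" for c c' u
  proof (rule PiE_ext)
    show "c' \<in> Pi\<^sub>E I (\<lambda>_. Q)" "c \<in> Pi\<^sub>E I (\<lambda>_. Q)" using c unfolding C_def by blast+
    fix p assume "p \<in> I"
    then obtain i w where p: "p = (i, w)" and "i < k" "length w \<le> n"
      by (auto simp: I_def words_below_def)
    have "c (i, w) \<in> Q \<and> c' (i, w) \<in> Q" if "i < k" "length w \<le> n" for i w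
      using in_Q c that by blast
    from truncated_portraits_left_coset_eq[OF D' \<open>Q \<subseteq> D'\<close> reps this that(3,4) \<open>i < k\<close> \<open>length w \<le> n\<close>]
    show "c' p = c p" unfolding p .
  qed
  have "pone \<in> Vnbhd D k 0" using pone_in_Lnpow[OF D D] by (simp add: Vnbhd_0_eq_Lnpow)
  have "inj_on (truncated_portraits k n) C"
  proof (rule inj_onI)
    fix c c' assume c: "c \<in> C" "c' \<in> C" and "truncated_portraits k n c = truncated_portraits k n c'"
    then have "truncated_portraits k n c' = pmult (truncated_portraits k n c) pone"
      by (simp add: fun_eq_iff)
    from coset_eq[OF c \<open>pone \<in> Vnbhd D k 0\<close> this] show "c = c'" by (rule sym)
  qed
  show ?thesis
  proof
    show "truncated_portraits k n ` C \<subseteq> Lnpow D D' k (Suc n)"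
    proof (rule image_subsetI)
      fix c assume "c \<in> C"
      show "truncated_portraits k n c \<in> Lnpow D D' k (Suc n)"
        by (rule truncated_portraits_in_Lnpow[OF D D']) (use in_Q[OF \<open>c \<in> C\<close>] \<open>Q \<subseteq> D'\<close> in blast)
    qed
    have "finite I" unfolding I_def using finite_words_below by blast
    then show "finite (truncated_portraits k n ` C)" unfolding C_def by (simp add: finite_PiE)
    have "card (truncated_portraits k n ` C) = card C" by (rule card_image[OF \<open>inj_on _ C\<close>])
    also have "card C = card Q ^ card I" unfolding C_def using \<open>finite I\<close> by (simp add: card_PiE)
    also have "card I = k * card (words_below (Suc n) :: 'a list set)"
      by (simp add: I_def card_cartesian_product)
    finally show "card (truncated_portraits k n ` C)
        = card Q ^ (k * card (words_below (Suc n) :: 'a list set))" .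
    show "distinct_left_cosets pmult (Vnbhd D k 0) (truncated_portraits k n ` C)"
      unfolding distinct_left_cosets_def
    proof (intro ballI impI)
      fix r r' u assume "r \<in> truncated_portraits k n ` C" "r' \<in> truncated_portraits k n ` C"
        and "u \<in> Vnbhd D k 0" "r' = pmult r u"
      then obtain c c' where "c \<in> C" "c' \<in> C"
        and "r = truncated_portraits k n c" "r' = truncated_portraits k n c'"
        by blast
      with coset_eq[OF \<open>c \<in> C\<close> \<open>c' \<in> C\<close> \<open>u \<in> Vnbhd D k 0\<close>] \<open>r' = pmult r u\<close> show "r = r'" by simp
    qed
  qed
qed

section \<open>Covolume of discrete subgroups of \<open>L(D,D')\<^sup>k\<close>\<close>

lemma power_ratio_ge:
  fixes d q l M :: nat
  assumes "0 < d" "d < q ^ l"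
  shows "real M / real d \<le> real (q ^ (l * M)) / real (d ^ M)"
proof -
  have "real M / real d \<le> 1 + real M * (1 / real d)" by simp
  also have "\<dots> \<le> (1 + 1 / real d) ^ M"
  proof (rule Bernoulli_inequality)
    have "0 \<le> 1 / real d" by simp
    then show "- 1 \<le> 1 / real d" by linarith
  qed
  also have "\<dots> = real ((d + 1) ^ M) / real (d ^ M)"
    using assms(1) by (simp add: field_simps power_divide)
  also have "\<dots> \<le> real (q ^ (l * M)) / real (d ^ M)"
  proof (rule divide_right_mono)
    have "(d + 1) ^ M \<le> q ^ (l * M)" using assms(2) by (simp add: power_mono power_mult)
    then show "real ((d + 1) ^ M) \<le> real (q ^ (l * M))" unfolding of_nat_le_iff .
  qed simp
  finally show ?thesis .
qed

locale Lpow_discrete_subgroup =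
  fixes D D' :: "('a::finite \<Rightarrow> 'a) set" and k :: nat
    and \<Gamma> :: "(nat \<Rightarrow> 'a list \<Rightarrow> 'a list) set" and m :: nat
  assumes perm_group_D: "perm_group D" and perm_group_D': "perm_group D'"
    and D_subset_D': "D \<subseteq> D'" and essential: "essential_subgroup D D'"
    and subgroup_\<Gamma>: "is_subgroup D D' k \<Gamma>"
    and discrete: "\<Gamma> \<inter> Vnbhd D k m \<subseteq> {pone}"
begin

lemma subgroup_Lpow_\<Gamma>: "subgroup \<Gamma> (Lpow_group D D' k)"
  by (rule subgroup_Lpow_group_if_is_subgroup[OF perm_group_D perm_group_D' subgroup_\<Gamma>])

lemma subgroup_Lnpow_Lpow: "subgroup (Lnpow D D' k n) (Lpow_group D D' k)"
  using subgroup_Lnpow[OF perm_group_D perm_group_D' perm_group_D perm_group_D'] by simp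

lemma pmult_in_Lnpow: "f \<in> Lnpow D D' k n \<Longrightarrow> g \<in> Lnpow D D' k n \<Longrightarrow> pmult f g \<in> Lnpow D D' k n"
  using subgroup.m_closed[OF subgroup_Lnpow_Lpow] by simp

lemma pinv_in_Lnpow: "f \<in> Lnpow D D' k n \<Longrightarrow> pinv f \<in> Lnpow D D' k n"
  using subgroup.m_inv_closed[OF subgroup_Lnpow_Lpow] subgroup.mem_carrier[OF subgroup_Lnpow_Lpow]
    m_inv_Lpow_group[OF perm_group_D perm_group_D'] by fastforce

definition ball_stabiliser :: "nat \<Rightarrow> (nat \<Rightarrow> 'a list \<Rightarrow> 'a list) set" where
  "ball_stabiliser n = {\<delta> \<in> Lnpow D D' k (Suc n). \<forall>i w. length w \<le> n \<longrightarrow> \<delta> i w = w}"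

lemma local_perm_pmult_ball_stabiliser:
  assumes "\<delta> \<in> ball_stabiliser n" "\<delta>' \<in> ball_stabiliser n" "length w \<le> n"
  shows "local_perm (pmult \<delta> \<delta>' i) w = local_perm (\<delta> i) w \<circ> local_perm (\<delta>' i) w"
proof -
  have "tree_aut (\<delta> i)" "tree_aut (\<delta>' i)" using assms(1,2) tree_aut_Lnpow
    by (auto simp: ball_stabiliser_def)
  moreover have "\<delta>' i w = w" using assms(2,3) by (simp add: ball_stabiliser_def)
  ultimately show ?thesis by (simp add: local_perm_comp)
qed

lemma local_perm_pinv_ball_stabiliser:
  assumes "\<delta> \<in> ball_stabiliser n" "length w \<le> n"
  shows "local_perm (pinv \<delta> i) w = inv (local_perm (\<delta> i) w)"
proof -
  have t: "tree_aut (\<delta> i)" using assms(1) tree_aut_Lnpow by (auto simp: ball_stabiliser_def)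
  have "\<delta> i w = w" using assms by (simp add: ball_stabiliser_def)
  then have "inv (\<delta> i) w = w" using t bij_is_inj inv_f_eq unfolding tree_aut_def by metis
  then show ?thesis using local_perm_inv[OF t] by simp
qed

lemma pmult_in_ball_stabiliser:
  "\<delta> \<in> ball_stabiliser n \<Longrightarrow> \<delta>' \<in> ball_stabiliser n \<Longrightarrow> pmult \<delta> \<delta>' \<in> ball_stabiliser n"
  by (simp add: ball_stabiliser_def pmult_in_Lnpow)

lemma pinv_in_ball_stabiliser:
  assumes "\<delta> \<in> ball_stabiliser n" shows "pinv \<delta> \<in> ball_stabiliser n"
proof -
  have "inv (\<delta> i) w = w" if "length w \<le> n" for i w
  proof -
    have "tree_aut (\<delta> i)" using assms by (auto simp: ball_stabiliser_def intro: tree_aut_Lnpow)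
    then have "bij (\<delta> i)" by (simp add: tree_aut_def)
    moreover have "\<delta> i w = w" using assms that by (simp add: ball_stabiliser_def)
    ultimately show ?thesis using bij_is_inj inv_f_eq by metis
  qed
  then show ?thesis using assms by (simp add: ball_stabiliser_def pinv_in_Lnpow)
qed

lemma pone_in_ball_stabiliser: "pone \<in> ball_stabiliser n"
  by (simp add: ball_stabiliser_def pone_in_Lnpow[OF perm_group_D perm_group_D'])

lemma ball_stabiliser_subset_Vnbhd:
  assumes "\<delta> \<in> ball_stabiliser n" "m \<le> n"
    and "\<And>i w. i < k \<Longrightarrow> length w = n \<Longrightarrow> local_perm (\<delta> i) w \<in> D"
  shows "\<delta> \<in> Vnbhd D k m"
proof -
  have "\<delta> i \<in> L0 D" if "i < k" for i
  proof -
    have \<delta>i: "\<delta> i \<in> Ln D D' (Suc n)" using assms(1) that by (simp add: ball_stabiliser_def Lnpow_def)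
    have "local_perm (\<delta> i) w \<in> D" for w
    proof (cases "length w < n")
      case True
      then have "local_perm (\<delta> i) w = id"
        using assms(1) by (intro local_perm_eq_id_if_fixes) (simp add: ball_stabiliser_def)
      then show ?thesis using perm_groupD(2)[OF perm_group_D] by simp
    next
      case False
      then show ?thesis using assms(3)[OF that] \<delta>i by (cases "length w = n") (auto simp: Ln_def)
    qed
    then show ?thesis using \<delta>i by (simp add: L0_def Ln_def)
  qed
  then show ?thesis using assms(1,2) by (auto simp: Vnbhd_def ball_stabiliser_def Lnpow_def)
qed

definition local_perms :: "(nat \<Rightarrow> 'a list \<Rightarrow> 'a list) \<Rightarrow> nat \<times> 'a list \<Rightarrow> 'a \<Rightarrow> 'a" where
  "local_perms \<gamma> = (\<lambda>(i, w). local_perm (\<gamma> i) w)"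

lemma pointwise_subgroup_local_perms:
  "pointwise_subgroup ({..<k} \<times> {w. length w = n}) (local_perms ` (\<Gamma> \<inter> ball_stabiliser n))"
  (is "pointwise_subgroup ?V (local_perms ` ?B)")
  unfolding pointwise_subgroup_def
proof (intro conjI ballI)
  have \<Gamma>: "pone \<in> \<Gamma>" "\<gamma> \<in> \<Gamma> \<Longrightarrow> \<gamma>' \<in> \<Gamma> \<Longrightarrow> pmult \<gamma> \<gamma>' \<in> \<Gamma>" "\<gamma> \<in> \<Gamma> \<Longrightarrow> pinv \<gamma> \<in> \<Gamma>"
    for \<gamma> \<gamma>' using subgroup_\<Gamma> by (auto simp: is_subgroup_def)
  have "local_perms pone = (\<lambda>_. id)" by (auto simp: local_perms_def)
  then show "(\<lambda>_. id) \<in> local_perms ` ?B"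
    using \<Gamma>(1) pone_in_ball_stabiliser by (metis IntI image_eqI)
  show "\<exists>r\<in>local_perms ` ?B. \<forall>v\<in>?V. r v = p v \<circ> q v"
    if "p \<in> local_perms ` ?B" "q \<in> local_perms ` ?B" for p q
  proof -
    obtain \<gamma> \<gamma>' where \<gamma>: "\<gamma> \<in> \<Gamma>" "\<gamma> \<in> ball_stabiliser n" "\<gamma>' \<in> \<Gamma>" "\<gamma>' \<in> ball_stabiliser n"
      and "p = local_perms \<gamma>" "q = local_perms \<gamma>'" using \<open>p \<in> _\<close> \<open>q \<in> _\<close> by blast
    then have "\<forall>v\<in>?V. local_perms (pmult \<gamma> \<gamma>') v = p v \<circ> q v"
      by (auto simp: local_perms_def local_perm_pmult_ball_stabiliser simp del: pmult_apply)
    moreover have "local_perms (pmult \<gamma> \<gamma>') \<in> local_perms ` ?B"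
      using \<gamma> \<Gamma>(2) pmult_in_ball_stabiliser by blast
    ultimately show ?thesis by blast
  qed
  show "\<exists>r\<in>local_perms ` ?B. \<forall>v\<in>?V. r v = inv (p v)" if "p \<in> local_perms ` ?B" for p
  proof -
    obtain \<gamma> where \<gamma>: "\<gamma> \<in> \<Gamma>" "\<gamma> \<in> ball_stabiliser n" and "p = local_perms \<gamma>"
      using \<open>p \<in> _\<close> by blast
    then have "\<forall>v\<in>?V. local_perms (pinv \<gamma>) v = inv (p v)"
      by (auto simp: local_perms_def local_perm_pinv_ball_stabiliser simp del: pinv_apply)
    moreover have "local_perms (pinv \<gamma>) \<in> local_perms ` ?B"
      using \<gamma> \<Gamma>(3) pinv_in_ball_stabiliser by blast
    ultimately show ?thesis by blast
  qed
qed

text \<open>For \<open>n \<ge> m\<close>, \<open>local_perms\<close> embeds \<open>\<Gamma> \<inter> ball_stabiliser n\<close> into \<open>D'\<^sup>V\<close>, \<open>V\<close> the vertices of length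
  \<open>n\<close>, meeting \<open>D\<^sup>V\<close> only in the image of \<open>\<Gamma> \<inter> Vnbhd D k m = {1}\<close>.\<close>

lemma Gamma_inter_ball_stabiliser_trivial:
  assumes "m \<le> n" "\<delta> \<in> \<Gamma>" "\<delta> \<in> ball_stabiliser n"
  shows "\<delta> = pone"
proof -
  define V where "V = {..<k} \<times> {w :: 'a list. length w = n}"
  have trivial: "\<gamma> = pone" if "\<gamma> \<in> \<Gamma>" "\<gamma> \<in> ball_stabiliser n" "\<forall>v\<in>V. local_perms \<gamma> v \<in> D" for \<gamma>
  proof -
    have "\<gamma> \<in> Vnbhd D k m"
      using that assms(1) by (intro ball_stabiliser_subset_Vnbhd) (auto simp: V_def local_perms_def)
    then show ?thesis using that(1) discrete by blast
  qed
  have "\<forall>p\<in>local_perms ` (\<Gamma> \<inter> ball_stabiliser n). \<forall>v\<in>V. p v = id"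
  proof (rule essential_subgroup_power[OF essential perm_group_D perm_group_D'])
    show "finite V" unfolding V_def using finite_lists_length_eq[of "UNIV :: 'a set" n] by simp
    show "pointwise_subgroup V (local_perms ` (\<Gamma> \<inter> ball_stabiliser n))"
      unfolding V_def by (rule pointwise_subgroup_local_perms)
    show "\<forall>p\<in>local_perms ` (\<Gamma> \<inter> ball_stabiliser n). \<forall>v\<in>V. p v \<in> D'"
    proof (intro ballI)
      fix p v assume "p \<in> local_perms ` (\<Gamma> \<inter> ball_stabiliser n)" "v \<in> V"
      then obtain \<gamma> i w where "\<gamma> \<in> ball_stabiliser n" "p = local_perms \<gamma>" "v = (i, w)" "i < k"
        unfolding V_def by blast
      then show "p v \<in> D'" by (simp add: local_perms_def ball_stabiliser_def Lnpow_def Ln_def)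
    qed
    show "\<forall>p\<in>local_perms ` (\<Gamma> \<inter> ball_stabiliser n). (\<forall>v\<in>V. p v \<in> D) \<longrightarrow> (\<forall>v\<in>V. p v = id)"
    proof (intro ballI impI)
      fix p v assume p: "p \<in> local_perms ` (\<Gamma> \<inter> ball_stabiliser n)" "\<forall>v\<in>V. p v \<in> D"
      then obtain \<gamma> where "\<gamma> \<in> \<Gamma>" "\<gamma> \<in> ball_stabiliser n" "p = local_perms \<gamma>" by blast
      with p(2) have "\<gamma> = pone" using trivial by blast
      with \<open>p = local_perms \<gamma>\<close> show "p v = id" by (simp add: local_perms_def split: prod.split)
    qed
  qed
  then have "\<forall>v\<in>V. local_perms \<delta> v = id" using assms(2,3) by blast
  then have "\<forall>v\<in>V. local_perms \<delta> v \<in> D" using perm_groupD(2)[OF perm_group_D] by metis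
  then show ?thesis by (rule trivial[OF assms(2,3)])
qed

lemma Gamma_Lnpow_eq_if_local_perms_eq:
  assumes "m \<le> n" and \<gamma>: "\<gamma> \<in> \<Gamma> \<inter> Lnpow D D' k (Suc n)" "\<gamma>' \<in> \<Gamma> \<inter> Lnpow D D' k (Suc n)"
    and eq: "\<And>i v. i < k \<Longrightarrow> length v < n \<Longrightarrow> local_perm (\<gamma>' i) v = local_perm (\<gamma> i) v"
  shows "\<gamma>' = \<gamma>"
proof -
  have t: "tree_aut (\<gamma>' i)" "tree_aut (\<gamma> i)" for i
    using \<gamma> by (auto intro: tree_aut_Lnpow)
  have "inv (\<gamma> i) (\<gamma>' i w) = w" if "length w \<le> n" for i w
  proof (cases "i < k")
    case True
    have "\<gamma>' i w = \<gamma> i w" using that by (intro tree_aut_eq_upto[OF t] eq[OF True]) simp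
    then show ?thesis using t(2)[of i] by (simp add: tree_aut_def bij_is_inj)
  next
    case False
    then have "\<gamma> i = id" "\<gamma>' i = id" using \<gamma> by (simp_all add: Lnpow_def)
    then show ?thesis by simp
  qed
  moreover have "pmult (pinv \<gamma>) \<gamma>' \<in> \<Gamma>" "pmult (pinv \<gamma>) \<gamma>' \<in> Lnpow D D' k (Suc n)"
    using \<gamma> subgroup_\<Gamma> pinv_in_Lnpow pmult_in_Lnpow by (auto simp: is_subgroup_def)
  ultimately have "pmult (pinv \<gamma>) \<gamma>' = pone"
    using Gamma_inter_ball_stabiliser_trivial[OF \<open>m \<le> n\<close>] by (simp add: ball_stabiliser_def)
  then have "inv (\<gamma> i) (\<gamma>' i x) = x" for i x
    by (metis comp_apply id_apply pinv_apply pmult_apply pone_apply)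
  then have "\<gamma>' i x = \<gamma> i x" for i x using t(2)[of i] by (metis bij_inv_eq_iff tree_aut_def)
  then show "\<gamma>' = \<gamma>" by (simp add: fun_eq_iff)
qed

lemma Gamma_Lnpow_finite_card_le:
  assumes "m \<le> n"
  shows "finite (\<Gamma> \<inter> Lnpow D D' k (Suc n))"
    and "card (\<Gamma> \<inter> Lnpow D D' k (Suc n)) \<le> card D' ^ (k * card (words_below n :: 'a list set))"
proof -
  define I where "I = {..<k} \<times> (words_below n :: 'a list set)"
  define \<Psi> where "\<Psi> \<gamma> = restrict (local_perms \<gamma>) I" for \<gamma> :: "nat \<Rightarrow> 'a list \<Rightarrow> 'a list"
  have "finite I" unfolding I_def using finite_words_below by blast
  have maps: "\<Psi> ` (\<Gamma> \<inter> Lnpow D D' k (Suc n)) \<subseteq> Pi\<^sub>E I (\<lambda>_. D')"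
    by (auto simp: \<Psi>_def I_def local_perms_def Lnpow_def Ln_def)
  have inj: "inj_on \<Psi> (\<Gamma> \<inter> Lnpow D D' k (Suc n))"
  proof (rule inj_onI)
    fix \<gamma> \<gamma>' assume \<gamma>: "\<gamma> \<in> \<Gamma> \<inter> Lnpow D D' k (Suc n)" "\<gamma>' \<in> \<Gamma> \<inter> Lnpow D D' k (Suc n)"
      and "\<Psi> \<gamma> = \<Psi> \<gamma>'"
    have "local_perm (\<gamma>' i) v = local_perm (\<gamma> i) v" if "i < k" "length v < n" for i v
      using fun_cong[OF \<open>\<Psi> \<gamma> = \<Psi> \<gamma>'\<close>, of "(i, v)"] that
      by (simp add: \<Psi>_def I_def words_below_def local_perms_def)
    from Gamma_Lnpow_eq_if_local_perms_eq[OF assms \<gamma> this] show "\<gamma> = \<gamma>'" by (rule sym)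
  qed
  have "finite (Pi\<^sub>E I (\<lambda>_. D'))" using \<open>finite I\<close> by (simp add: finite_PiE)
  then show "finite (\<Gamma> \<inter> Lnpow D D' k (Suc n))" by (rule inj_on_finite[OF inj maps])
  have "card (\<Gamma> \<inter> Lnpow D D' k (Suc n)) \<le> card (Pi\<^sub>E I (\<lambda>_. D'))"
    using \<open>finite (Pi\<^sub>E I (\<lambda>_. D'))\<close> by (rule card_inj_on_le[OF inj maps])
  also have "card (Pi\<^sub>E I (\<lambda>_. D')) = card D' ^ (k * card (words_below n :: 'a list set))"
    using \<open>finite I\<close> by (simp add: card_PiE I_def card_cartesian_product)
  finally show "card (\<Gamma> \<inter> Lnpow D D' k (Suc n)) \<le> card D' ^ (k * card (words_below n :: 'a list set))" .
qed

lemma self_in_dcoset: "r \<in> dcoset D k \<Gamma> r"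
proof -
  have "pone \<in> \<Gamma>" using subgroup_\<Gamma> by (simp add: is_subgroup_def)
  moreover have "pone \<in> Vnbhd D k 0"
    using pone_in_Lnpow[OF perm_group_D perm_group_D] by (simp add: Vnbhd_0_eq_Lnpow)
  moreover have "r = pmult (pmult pone r) pone" by (simp add: fun_eq_iff)
  ultimately show ?thesis unfolding dcoset_def by blast
qed

lemma dcoset_mass_representative:
  assumes "r \<in> Lpow D D' k"
  obtains g where "g \<in> Lpow D D' k" "dcoset D k \<Gamma> r = dcoset D k \<Gamma> g"
    "dcoset_mass D D' k \<Gamma> (dcoset D k \<Gamma> r)
       = 1 / real (card (\<Gamma> \<inter> (\<lambda>u. pmult (pmult g u) (pinv g)) ` Vnbhd D k 0))"
proof
  define g where "g = (SOME g. g \<in> Lpow D D' k \<and> dcoset D k \<Gamma> r = dcoset D k \<Gamma> g)"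
  have "\<exists>g. g \<in> Lpow D D' k \<and> dcoset D k \<Gamma> r = dcoset D k \<Gamma> g" using assms by blast
  then have "g \<in> Lpow D D' k \<and> dcoset D k \<Gamma> r = dcoset D k \<Gamma> g" unfolding g_def by (rule someI_ex)
  then show "g \<in> Lpow D D' k" "dcoset D k \<Gamma> r = dcoset D k \<Gamma> g" by auto
  show "dcoset_mass D D' k \<Gamma> (dcoset D k \<Gamma> r)
      = 1 / real (card (\<Gamma> \<inter> (\<lambda>u. pmult (pmult g u) (pinv g)) ` Vnbhd D k 0))"
    unfolding dcoset_mass_def Let_def g_def ..
qed

lemma dcoset_mass_ge:
  assumes R: "R \<subseteq> Lnpow D D' k (Suc n)" and fin: "finite (\<Gamma> \<inter> Lnpow D D' k (Suc n))"
    and distinct: "distinct_left_cosets pmult (Vnbhd D k 0) R" and "r\<^sub>0 \<in> R"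
  shows "real (card {r \<in> R. dcoset D k \<Gamma> r = dcoset D k \<Gamma> r\<^sub>0}) / real (card (\<Gamma> \<inter> Lnpow D D' k (Suc n)))
           \<le> dcoset_mass D D' k \<Gamma> (dcoset D k \<Gamma> r\<^sub>0)"
proof -
  let ?G = "Lpow_group D D' k"
  interpret G: group ?G by (rule group_Lpow_group[OF perm_group_D perm_group_D'])
  define U X where "U = Vnbhd D k 0" and "X = Lnpow D D' k (Suc n)"
  define R\<^sub>C where "R\<^sub>C = {r \<in> R. dcoset D k \<Gamma> r = dcoset D k \<Gamma> r\<^sub>0}"
  have "r\<^sub>0 \<in> Lpow D D' k" using \<open>r\<^sub>0 \<in> R\<close> R subgroup.subset[OF subgroup_Lnpow_Lpow] by auto
  then obtain g where g: "g \<in> Lpow D D' k" "dcoset D k \<Gamma> r\<^sub>0 = dcoset D k \<Gamma> g"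
    and mass: "dcoset_mass D D' k \<Gamma> (dcoset D k \<Gamma> r\<^sub>0)
      = 1 / real (card (\<Gamma> \<inter> (\<lambda>u. pmult (pmult g u) (pinv g)) ` U))"
    unfolding U_def by (rule dcoset_mass_representative)
  define S where "S = \<Gamma> \<inter> (\<lambda>u. pmult (pmult g u) (pinv g)) ` U"
  have subgroup_U: "subgroup U ?G" unfolding U_def Vnbhd_0_eq_Lnpow
    using subgroup_Lnpow[OF perm_group_D perm_group_D' perm_group_D perm_group_D order_refl D_subset_D'] .
  have "U \<subseteq> X" using Ln_mono[OF _ order_refl D_subset_D']
    by (force simp: U_def X_def Vnbhd_0_eq_Lnpow Lnpow_def)
  have "R\<^sub>C \<subseteq> X" using R by (auto simp: R\<^sub>C_def X_def)
  have in_dcoset: "\<exists>\<gamma>\<in>\<Gamma>. \<exists>u\<in>U. r = \<gamma> \<otimes>\<^bsub>?G\<^esub> g \<otimes>\<^bsub>?G\<^esub> u" if "r \<in> R\<^sub>C" for r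
  proof -
    have "r \<in> dcoset D k \<Gamma> g" using self_in_dcoset[of r] that g(2) by (simp add: R\<^sub>C_def)
    then show ?thesis by (auto simp: dcoset_def U_def)
  qed
  have "distinct_left_cosets (mult ?G) U R\<^sub>C"
    using distinct_left_cosets_subset[OF distinct] by (simp add: R\<^sub>C_def U_def)
  moreover have "r\<^sub>0 \<in> R\<^sub>C" using \<open>r\<^sub>0 \<in> R\<close> by (simp add: R\<^sub>C_def)
  moreover have "g \<in> carrier ?G" using g(1) by simp
  ultimately have "finite (\<Gamma> \<inter> (\<lambda>u. g \<otimes>\<^bsub>?G\<^esub> u \<otimes>\<^bsub>?G\<^esub> m_inv ?G g) ` U)"
    "card R\<^sub>C * card (\<Gamma> \<inter> (\<lambda>u. g \<otimes>\<^bsub>?G\<^esub> u \<otimes>\<^bsub>?G\<^esub> m_inv ?G g) ` U) \<le> card (\<Gamma> \<inter> X)"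
    using G.card_double_coset_reps_le[OF subgroup_Lpow_\<Gamma> subgroup_U subgroup_Lnpow_Lpow
        \<open>U \<subseteq> X\<close>[unfolded X_def] \<open>R\<^sub>C \<subseteq> X\<close>[unfolded X_def] _ in_dcoset _ fin]
    unfolding X_def by blast+
  from this[unfolded Lpow_group_simps m_inv_Lpow_group[OF perm_group_D perm_group_D' g(1)], folded S_def]
  have "finite S" "card R\<^sub>C * card S \<le> card (\<Gamma> \<inter> X)" by simp_all
  moreover have "pone \<in> S"
  proof -
    have "pmult g (pinv g) = pone"
      using G.r_inv[of g] g(1) m_inv_Lpow_group[OF perm_group_D perm_group_D' g(1)] by simp
    then have "pone = pmult (pmult g pone) (pinv g)" by (simp add: fun_eq_iff)
    then show ?thesis
      using subgroup.one_closed[OF subgroup_Lpow_\<Gamma>] subgroup.one_closed[OF subgroup_U]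
      unfolding S_def by auto
  qed
  ultimately have "0 < card S" "real (card R\<^sub>C) * real (card S) \<le> real (card (\<Gamma> \<inter> X))"
    by (auto simp: card_gt_0_iff simp flip: of_nat_mult)
  then have "real (card R\<^sub>C) / real (card (\<Gamma> \<inter> X)) \<le> 1 / real (card S)"
    by (cases "card (\<Gamma> \<inter> X) = 0") (simp_all add: field_simps)
  then show ?thesis using mass by (simp add: R\<^sub>C_def X_def S_def)
qed

lemma infsum_dcoset_mass_ge:
  assumes "m \<le> n" and "Q \<subseteq> D'" and reps: "distinct_left_cosets (\<circ>) D Q"
    and summable: "dcoset_mass D D' k \<Gamma> summable_on dcosets D D' k \<Gamma>"
  shows "real (card Q ^ (k * card (words_below (Suc n) :: 'a list set)))
           / real (card D' ^ (k * card (words_below n :: 'a list set)))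
         \<le> infsum (dcoset_mass D D' k \<Gamma>) (dcosets D D' k \<Gamma>)"
proof -
  define F where "F = \<Gamma> \<inter> Lnpow D D' k (Suc n)"
  obtain R where R: "R \<subseteq> Lnpow D D' k (Suc n)" "finite R"
    "card R = card Q ^ (k * card (words_below (Suc n) :: 'a list set))"
    and distinct: "distinct_left_cosets pmult (Vnbhd D k 0) R"
    by (rule Lnpow_distinct_cosets[OF perm_group_D perm_group_D' \<open>Q \<subseteq> D'\<close> reps])
  have "finite F" and card_F: "card F \<le> card D' ^ (k * card (words_below n :: 'a list set))"
    unfolding F_def using Gamma_Lnpow_finite_card_le[OF \<open>m \<le> n\<close>] by auto
  have "pone \<in> F"
    using subgroup_\<Gamma> pone_in_Lnpow[OF perm_group_D perm_group_D'] by (simp add: F_def is_subgroup_def)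
  then have "0 < card F" using \<open>finite F\<close> card_gt_0_iff by blast
  define h where "h = dcoset D k \<Gamma>"
  have "real (card R) / real (card F) = (\<Sum>C\<in>h ` R. real (card {r \<in> R. h r = C}) / real (card F))"
    using sum.image_gen[OF \<open>finite R\<close>, of "\<lambda>_. 1 :: real" h] by (simp add: sum_divide_distrib)
  also have "\<dots> \<le> (\<Sum>C\<in>h ` R. dcoset_mass D D' k \<Gamma> C)"
  proof (rule sum_mono)
    fix C assume "C \<in> h ` R"
    then obtain r\<^sub>0 where "r\<^sub>0 \<in> R" "C = h r\<^sub>0" by blast
    have "real (card {r \<in> R. h r = h r\<^sub>0}) / real (card F) \<le> dcoset_mass D D' k \<Gamma> (h r\<^sub>0)"
      unfolding h_def F_def using \<open>finite F\<close>[unfolded F_def]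
      by (rule dcoset_mass_ge[OF R(1) _ distinct \<open>r\<^sub>0 \<in> R\<close>])
    then show "real (card {r \<in> R. h r = C}) / real (card F) \<le> dcoset_mass D D' k \<Gamma> C"
      using \<open>C = h r\<^sub>0\<close> by simp
  qed
  also have "\<dots> \<le> infsum (dcoset_mass D D' k \<Gamma>) (dcosets D D' k \<Gamma>)"
  proof (rule finite_sum_le_infsum[OF summable])
    show "finite (h ` R)" using \<open>finite R\<close> by simp
    show "h ` R \<subseteq> dcosets D D' k \<Gamma>"
      using R(1) subgroup.subset[OF subgroup_Lnpow_Lpow] unfolding h_def dcosets_def by auto
    show "0 \<le> dcoset_mass D D' k \<Gamma> C" for C by (simp add: dcoset_mass_def Let_def)
  qed
  finally have "real (card R) / real (card F) \<le> infsum (dcoset_mass D D' k \<Gamma>) (dcosets D D' k \<Gamma>)" .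
  moreover have "real (card R) / real (card D' ^ (k * card (words_below n :: 'a list set)))
      \<le> real (card R) / real (card F)"
    using card_F \<open>0 < card F\<close>
    by (intro divide_left_mono)
      (simp_all only: of_nat_le_iff of_nat_0_le_iff of_nat_0_less_iff mult_pos_pos zero_less_power)
  ultimately show ?thesis using R(3) by simp
qed

lemma covolume_unbounded:
  assumes index: "card D' < (card D' div card D) ^ CARD('a)" and "1 \<le> k" and "m \<le> n"
    and summable: "dcoset_mass D D' k \<Gamma> summable_on dcosets D D' k \<Gamma>"
  shows "real n / real (card D') \<le> infsum (dcoset_mass D D' k \<Gamma>) (dcosets D D' k \<Gamma>)"
proof -
  obtain Q where Q: "Q \<subseteq> D'" "card D' div card D \<le> card Q" and reps: "distinct_left_cosets (\<circ>) D Q"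
    by (rule coset_representatives[OF perm_group_D])
  define d q A where "d = card D'" and "q = card Q" and "A = card (words_below n :: 'a list set)"
  have "finite D'" by simp
  then have "0 < d" unfolding d_def using perm_groupD(2)[OF perm_group_D'] card_gt_0_iff by blast
  have "(card D' div card D) ^ CARD('a) \<le> q ^ CARD('a)" using Q(2) by (simp add: q_def power_mono)
  then have "d < q ^ CARD('a)" using index unfolding d_def by linarith
  moreover have "0 < CARD('a)" by simp
  ultimately have "1 \<le> q" using \<open>0 < d\<close> by (cases "q = 0") (simp_all add: power_0_left)
  have "A \<le> k * A" using \<open>1 \<le> k\<close> by simp
  then have "n \<le> k * A" using card_words_below_ge[where 'a='a, of n] unfolding A_def by linarith
  then have "real n / real d \<le> real (k * A) / real d"
    by (intro divide_right_mono) (simp_all only: of_nat_le_iff of_nat_0_le_iff)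
  also have "\<dots> \<le> real (q ^ (CARD('a) * (k * A))) / real (d ^ (k * A))"
    by (rule power_ratio_ge[OF \<open>0 < d\<close> \<open>d < q ^ CARD('a)\<close>])
  also have "\<dots> \<le> real (q ^ (k * (1 + CARD('a) * A))) / real (d ^ (k * A))"
    using \<open>1 \<le> q\<close> by (intro divide_right_mono) (simp_all add: power_increasing algebra_simps)
  also have "\<dots> \<le> infsum (dcoset_mass D D' k \<Gamma>) (dcosets D D' k \<Gamma>)"
    using infsum_dcoset_mass_ge[OF \<open>m \<le> n\<close> Q(1) reps summable] card_words_below_Suc[where 'a='a, of n]
    unfolding d_def q_def A_def by simp
  finally show ?thesis unfolding d_def .
qed

end

theorem mainTheorem19:
  fixes D D' :: "('a::finite \<Rightarrow> 'a) set" and k :: nat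
  assumes "CARD('a) \<ge> 2"
    and "perm_group D" and "perm_group D'" and "D \<subseteq> D'"
    and "essential_subgroup D D'"
    and "card D' < (card D' div card D) ^ CARD('a)"
    and "k \<ge> 1"
  shows "\<not> (\<exists>\<Gamma>. is_lattice D D' k \<Gamma>)"
proof
  assume "\<exists>\<Gamma>. is_lattice D D' k \<Gamma>"
  then obtain \<Gamma> where \<Gamma>: "is_subgroup D D' k \<Gamma>" "is_discrete D D' k \<Gamma>"
    and summable: "dcoset_mass D D' k \<Gamma> summable_on dcosets D D' k \<Gamma>"
    unfolding is_lattice_def finite_covolume_def by blast
  obtain m where "\<Gamma> \<inter> Vnbhd D k m \<subseteq> {pone}" using discrete_subgroup_avoids_Vnbhd[OF \<Gamma>] .
  then interpret Lpow_discrete_subgroup D D' k \<Gamma> m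
    using assms(2-5) \<Gamma>(1) by unfold_locales
  define S where "S = infsum (dcoset_mass D D' k \<Gamma>) (dcosets D D' k \<Gamma>)"
  define n where "n = max m (nat \<lceil>S * real (card D')\<rceil> + 1)"
  have "real n / real (card D') \<le> S"
    unfolding S_def by (rule covolume_unbounded[OF assms(6,7) _ summable]) (simp add: n_def)
  moreover have "0 < card D'" using perm_groupD(2)[OF assms(3)] card_gt_0_iff
    by (metis empty_iff finite)
  moreover have "S * real (card D') < real n" unfolding n_def by linarith
  ultimately show False by (simp add: divide_le_eq)
qed

end
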